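(* Let $q$ be a prime power and let $k\ge1$, $n_{\mathrm T}\ge k$, $1\le n\le n_{\mathrm T}$ and $0\le x\le k$ be integers. Consider $n_{\mathrm T}$ transmitted packets whose coding vectors in $\mathbb{F}_q^k$ are $\mathbf{e}_1,\dots,\mathbf{e}_k$ (the $k$ source packets) together with $n_{\mathrm T}-k$ further vectors (coded packets) that are independent and uniformly distributed on $\mathbb{F}_q^k$. A receiver obtains a uniformly random $n$-element subset of the $n_{\mathrm T}$ packets, chosen independently of the random coding vectors; let $\mathbf{M}$ be the $n\times k$ matrix whose rows are the coding vectors of the received packets, and $X=\{i\in\{1,\dots,k\}:\mathbf{e}_i\in\mathrm{Row}(\mathbf{M})\}$. Then, with $h_{\min}=\max(0,n-n_{\mathrm T}+k)$ and $x_{\min}=\max(0,x-h)$, $$P_{\mathrm s}(|X|\ge x\mid N=n)=\frac{1}{\binom{n_{\mathrm T}}{n}}\sum_{r=x}^{\min(n,k)}\sum_{h=h_{\min}}^{r}\Bigg(\binom{k}{h}\binom{n_{\mathrm T}-k}{n-h}q^{-(n-h)(k-h)}\prod_{\ell=0}^{r-h-1}(q^{n-h}-q^\ell)\cdot\sum_{i=x_{\min}}^{r-h}\binom{k-h}{i}\sum_{j=0}^{k-h-i}(-1)^j\binom{k-h-i}{j}\binom{k-h-i-j}{r-h-i-j}_q\Bigg),$$ where an empty sum equals $0$, an empty product equals $1$, and $\binom{a}{b}=0$ if $b<0$ or $b>a$.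
   Context: $\mathbf{e}_i$ denotes the $i$-th standard unit vector of $\mathbb{F}_q^k$, and $\mathrm{Row}(\mathbf{M})$ is the row space of $\mathbf{M}$. $N$ denotes the number of received packets (rows of $\mathbf{M}$). $\binom{m}{d}$ is the ordinary binomial coefficient. $\binom{m}{d}_q$ is the Gaussian binomial coefficient, i.e. the number of $d$-dimensional subspaces of an $m$-dimensional vector space over $\mathbb{F}_q$, $\binom{m}{d}_q=\prod_{i=0}^{d-1}\frac{q^{m}-q^{i}}{q^{d}-q^{i}}$ for $0\le d\le m$. By convention $\binom{m}{d}_q=0$ if $d<0$ or $d>m$. *)

theory Defs
  imports "HOL-Probability.Probability"
begin

text \<open>Vectors of F_q^k are represented as functions nat => 'a on the index set {0..<k}
  (indices are 0-based).\<close>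

definition unit_vec :: "nat \<Rightarrow> nat \<Rightarrow> nat \<Rightarrow> 'a::zero_neq_one" where
  "unit_vec k i = (\<lambda>j\<in>{0..<k}. if j = i then 1 else 0)"

text \<open>Coding vector of transmitted packet p (0 <= p < nT): the first k packets are the source
  packets e_1..e_k, packet p >= k is the coded packet with random vector v (p - k).\<close>
definition coding_vec :: "nat \<Rightarrow> (nat \<Rightarrow> nat \<Rightarrow> 'a::zero_neq_one) \<Rightarrow> nat \<Rightarrow> nat \<Rightarrow> 'a" where
  "coding_vec k v p = (if p < k then unit_vec k p else v (p - k))"

definition in_row_space :: "nat \<Rightarrow> (nat \<Rightarrow> nat \<Rightarrow> 'a::field) \<Rightarrow> nat set \<Rightarrow> (nat \<Rightarrow> 'a) \<Rightarrow> bool" where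
  "in_row_space k rw S u \<longleftrightarrow> (\<exists>c. \<forall>j<k. u j = (\<Sum>p\<in>S. c p * rw p j))"

definition recovered :: "nat \<Rightarrow> (nat \<Rightarrow> nat \<Rightarrow> 'a::field) \<Rightarrow> nat set \<Rightarrow> nat set" where
  "recovered k v S = {i. i < k \<and> in_row_space k (coding_vec k v) S (unit_vec k i)}"

definition binom_int :: "int \<Rightarrow> int \<Rightarrow> real" where
  "binom_int a b = (if b < 0 \<or> b > a then 0 else real (nat a choose nat b))"

definition qbinom :: "real \<Rightarrow> int \<Rightarrow> int \<Rightarrow> real" where
  "qbinom q m d = (if d < 0 \<or> d > m then 0 else
     (\<Prod>i\<in>{0..<d}. (q powi m - q powi i) / (q powi d - q powi i)))"

end

theory Submission
  imports Defs "HOL-Library.Function_Algebras"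
begin

text \<open>Condition on the set S of received packets. If S contains h source packets, those h
  coordinates are recovered outright, and clearing them reduces the problem to the n - h received
  coded vectors projected to the remaining k - h coordinates, which are again independent and
  uniform. Their span U has some dimension e = r - h. A fixed e-dimensional U is spanned by
  exactly \<Prod>l<e. (q^(n-h) - q^l) of these tuples, and the number of e-dimensional subspaces
  of F_q^(k-h) meeting the standard basis in exactly i prescribed vectors follows by
  inclusion-exclusion from the Gaussian binomial counting subspaces that contain a given set of
  basis vectors. Summing over i, e and the hypergeometric distribution of h gives the formula.\<close>

interpretation vec: vector_space "\<lambda>(c::'a::field) (f::nat \<Rightarrow> 'a). (\<lambda>j. c * f j)"
  by unfold_locales (auto simp: fun_eq_iff algebra_simps)

section \<open>Sizes of spans over a finite field\<close>

lemma CARD_field_ge_2: "2 \<le> CARD('a::{field,finite})"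
proof -
  have "card {0::'a, 1} \<le> CARD('a)" by (intro card_mono) simp_all
  thus ?thesis by simp
qed

lemma one_less_real_CARD: "1 < real CARD('a::{field,finite})"
  using CARD_field_ge_2[where 'a='a] by simp

lemma CARD_power_eq_iff: "CARD('a::{field,finite}) ^ a = CARD('a) ^ b \<longleftrightarrow> a = b"
  using CARD_field_ge_2[where 'a='a] by (simp add: power_inject_exp)

lemma CARD_power_le_iff: "CARD('a::{field,finite}) ^ a \<le> CARD('a) ^ b \<longleftrightarrow> a \<le> b"
  using CARD_field_ge_2[where 'a='a] by (simp add: power_increasing_iff)

lemma finite_if_card_CARD_power: "card W = CARD('a::{field,finite}) ^ d \<Longrightarrow> finite W"
  using CARD_field_ge_2[where 'a='a] by (metis card_eq_0_iff not_numeral_le_zero power_not_zero zero_le_numeral)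

lemma card_span_insert:
  fixes w :: "nat \<Rightarrow> 'a::{field,finite}"
  assumes "w \<notin> vec.span U"
  shows "card (vec.span (insert w U)) = CARD('a) * card (vec.span U)"
proof -
  let ?f = "\<lambda>(c::'a,y). (\<lambda>j. c * w j) + y"
  have eq: "vec.span (insert w U) = ?f ` (UNIV \<times> vec.span U)"
  proof (rule set_eqI)
    fix x
    show "x \<in> vec.span (insert w U) \<longleftrightarrow> x \<in> ?f ` (UNIV \<times> vec.span U)"
    proof
      assume "x \<in> vec.span (insert w U)"
      then obtain k where k: "x - (\<lambda>j. k * w j) \<in> vec.span U" unfolding vec.span_insert by blast
      have "x = ?f (k, x - (\<lambda>j. k * w j))" by (auto simp: fun_eq_iff)
      with k show "x \<in> ?f ` (UNIV \<times> vec.span U)" by blast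
    next
      assume "x \<in> ?f ` (UNIV \<times> vec.span U)"
      then obtain c y where y: "y \<in> vec.span U" and x: "x = (\<lambda>j. c * w j) + y" by auto
      have "x - (\<lambda>j. c * w j) = y" using x by (auto simp: fun_eq_iff)
      with y show "x \<in> vec.span (insert w U)" unfolding vec.span_insert by blast
    qed
  qed
  have inj: "inj_on ?f (UNIV \<times> vec.span U)"
  proof (rule inj_onI, clarify)
    fix c y c' y'
    assume y: "y \<in> vec.span U" and y': "y' \<in> vec.span U"
      and e: "(\<lambda>j. c * w j) + y = (\<lambda>j. c' * w j) + y'"
    have d: "(\<lambda>j. (c - c') * w j) = y' - y" using e
      by (auto simp: fun_eq_iff algebra_simps)
    show "c = c' \<and> y = y'"
    proof (cases "c = c'")
      case True
      with e show ?thesis by (auto simp: fun_eq_iff)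
    next
      case False
      have "(\<lambda>j. inverse (c - c') * (y' - y) j) \<in> vec.span U"
        by (intro vec.span_scale vec.span_diff y y')
      moreover have "(\<lambda>j. inverse (c - c') * (y' - y) j) = w"
        using False by (auto simp: fun_eq_iff simp flip: d)
      ultimately show ?thesis using assms by simp
    qed
  qed
  show ?thesis unfolding eq card_image[OF inj] card_cartesian_product by simp
qed

lemma card_span_power:
  fixes S :: "(nat \<Rightarrow> 'a::{field,finite}) set"
  assumes "finite S"
  shows "\<exists>e. card (vec.span S) = CARD('a) ^ e"
  using assms
proof (induction S rule: finite_induct)
  case empty
  show ?case by (rule exI[of _ 0]) (simp add: vec.span_empty)
next
  case (insert x F)
  then obtain e where e: "card (vec.span F) = CARD('a) ^ e" by blast
  show ?case
  proof (cases "x \<in> vec.span F")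
    case True
    then show ?thesis using e vec.span_redundant by metis
  next
    case False
    then show ?thesis using e card_span_insert[OF False] by (metis power_Suc)
  qed
qed

section \<open>Counting tuples by the size of their span\<close>

text \<open>span_dim_count q d n e counts the n-tuples of vectors of a q^d-element subspace whose span
  has q^e elements; the recursion adjoins one vector at a time.\<close>

fun span_dim_count :: "nat \<Rightarrow> nat \<Rightarrow> nat \<Rightarrow> nat \<Rightarrow> nat" where
  "span_dim_count q d 0 e = (if e = 0 then 1 else 0)"
| "span_dim_count q d (Suc n) e = q^e * span_dim_count q d n e
     + (if e = 0 then 0 else (q^d - q^(e-1)) * span_dim_count q d n (e-1))"

lemma card_pairs_eq_sum:
  assumes "finite X" "finite W"
  shows "card {p \<in> W \<times> X. R (fst p) (snd p)} = (\<Sum>g\<in>X. card {y\<in>W. R y g})"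
proof -
  have "card {p \<in> W \<times> X. R (fst p) (snd p)} = (\<Sum>p\<in>W \<times> X. if R (fst p) (snd p) then 1 else 0)"
    using assms by (simp add: sum.inter_filter[symmetric])
  also have "\<dots> = (\<Sum>y\<in>W. \<Sum>g\<in>X. if R y g then 1 else 0)"
    unfolding sum.cartesian_product by (intro sum.cong) (auto simp: case_prod_beta)
  also have "\<dots> = (\<Sum>g\<in>X. \<Sum>y\<in>W. if R y g then 1 else 0)" by (rule sum.swap)
  also have "\<dots> = (\<Sum>g\<in>X. card {y\<in>W. R y g})" using assms by (simp add: sum.inter_filter[symmetric])
  finally show ?thesis .
qed

lemma card_extensions_by_span:
  fixes W :: "(nat \<Rightarrow> 'a::{field,finite}) set"
  assumes W: "vec.subspace W" "card W = CARD('a)^d" and U: "U \<subseteq> W"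
  shows "card {y \<in> W. card (vec.span (insert y U)) = CARD('a)^e} =
     (if card (vec.span U) = CARD('a)^e then CARD('a)^e else 0) +
     (if e \<noteq> 0 \<and> card (vec.span U) = CARD('a)^(e-1) then CARD('a)^d - CARD('a)^(e-1) else 0)"
proof -
  let ?q = "CARD('a)" and ?s = "card (vec.span U)"
  have q2: "?q \<ge> 2" by (rule CARD_field_ge_2)
  have sub: "vec.span U \<subseteq> W" using vec.span_minimal[OF U W(1)] .
  have finW: "finite W" using finite_if_card_CARD_power[OF W(2)] .
  have finS: "finite (vec.span U)" using finite_subset[OF sub finW] .
  have eq: "{y \<in> W. card (vec.span (insert y U)) = ?q^e}
      = {y \<in> vec.span U. ?s = ?q^e} \<union> {y \<in> W - vec.span U. ?q * ?s = ?q^e}"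
  proof (rule set_eqI)
    fix y
    show "y \<in> {y \<in> W. card (vec.span (insert y U)) = ?q^e}
      \<longleftrightarrow> y \<in> {y \<in> vec.span U. ?s = ?q^e} \<union> {y \<in> W - vec.span U. ?q * ?s = ?q^e}"
    proof (cases "y \<in> vec.span U")
      case True
      then show ?thesis using sub by (auto simp: vec.span_redundant)
    next
      case False
      then show ?thesis by (simp add: card_span_insert)
    qed
  qed
  have "card {y \<in> W. card (vec.span (insert y U)) = ?q^e}
      = card {y \<in> vec.span U. ?s = ?q^e} + card {y \<in> W - vec.span U. ?q * ?s = ?q^e}"
    unfolding eq by (rule card_Un_disjoint) (use finS finW in auto)
  also have "card {y \<in> vec.span U. ?s = ?q^e} = (if ?s = ?q^e then ?q^e else 0)" by auto
  also have "card {y \<in> W - vec.span U. ?q * ?s = ?q^e} = (if ?q * ?s = ?q^e then ?q^d - ?s else 0)"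
    using card_Diff_subset[OF finS sub] W(2) by (simp add: set_diff_eq)
  also have "(?q * ?s = ?q^e) \<longleftrightarrow> (e \<noteq> 0 \<and> ?s = ?q^(e-1))"
    using q2 by (cases e) auto
  finally show ?thesis by auto
qed

lemma card_tuples_by_span:
  fixes W :: "(nat \<Rightarrow> 'a::{field,finite}) set"
  assumes W: "vec.subspace W" "card W = CARD('a)^d" and A: "finite A"
  shows "card {u \<in> A \<rightarrow>\<^sub>E W. card (vec.span (u ` A)) = CARD('a)^e} = span_dim_count CARD('a) d (card A) e"
  using A
proof (induction A arbitrary: e rule: finite_induct)
  case empty
  have e1: "(Suc 0 = CARD('a)^e) = (e = 0)" by (metis One_nat_def CARD_power_eq_iff power_0)
  have "{u \<in> {} \<rightarrow>\<^sub>E W. card (vec.span (u ` {})) = CARD('a)^e} = (if e = 0 then {\<lambda>_. undefined} else {})"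
    by (cases "e = 0") (simp_all add: vec.span_empty e1)
  then show ?case by (simp add: e1)
next
  case (insert a A)
  let ?q = "CARD('a)"
  let ?X = "A \<rightarrow>\<^sub>E W"
  let ?f = "\<lambda>(y, g). g(a := y)"
  have finW: "finite W" using finite_if_card_CARD_power[OF W(2)] .
  have finX: "finite ?X" using finW insert(1) by (simp add: finite_PiE)
  have inj: "inj_on ?f (W \<times> ?X)" using inj_combinator[OF insert(2), of "\<lambda>_. W"] by simp
  have img: "insert a A \<rightarrow>\<^sub>E W = ?f ` (W \<times> ?X)" using PiE_insert_eq[of a A "\<lambda>_. W"] by simp
  have fim: "?f p ` insert a A = insert (fst p) (snd p ` A)" for p
    using insert(2) by (cases p) auto
  have setEq: "{u \<in> insert a A \<rightarrow>\<^sub>E W. card (vec.span (u ` insert a A)) = ?q^e}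
        = ?f ` {p \<in> W \<times> ?X. card (vec.span (?f p ` insert a A)) = ?q^e}" unfolding img by auto
  have "card {u \<in> insert a A \<rightarrow>\<^sub>E W. card (vec.span (u ` insert a A)) = ?q^e}
        = card {p \<in> W \<times> ?X. card (vec.span (?f p ` insert a A)) = ?q^e}"
    unfolding setEq by (rule card_image[OF inj_on_subset[OF inj]]) auto
  also have "\<dots> = card {p \<in> W \<times> ?X. card (vec.span (insert (fst p) (snd p ` A))) = ?q^e}"
    by (simp only: fim)
  also have "\<dots> = (\<Sum>g\<in>?X. card {y\<in>W. card (vec.span (insert y (g ` A))) = ?q^e})"
    by (rule card_pairs_eq_sum[OF finX finW])
  also have "\<dots> = (\<Sum>g\<in>?X. (if card (vec.span (g`A)) = ?q^e then ?q^e else 0) +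
     (if e \<noteq> 0 \<and> card (vec.span (g`A)) = ?q^(e-1) then ?q^d - ?q^(e-1) else 0))"
    by (rule sum.cong[OF refl], rule card_extensions_by_span[OF W]) (auto simp: PiE_def Pi_def)
  also have "\<dots> = ?q^e * card {g\<in>?X. card (vec.span (g`A)) = ?q^e} +
      (if e = 0 then 0 else (?q^d - ?q^(e-1)) * card {g\<in>?X. card (vec.span (g`A)) = ?q^(e-1)})"
    using finX by (simp add: sum.distrib sum.inter_filter[symmetric])
  also have "\<dots> = span_dim_count ?q d (card (insert a A)) e"
    using insert by simp
  finally show ?case .
qed

text \<open>qfalling q m e counts the linearly independent e-tuples in F_q^m.\<close>

definition qfalling :: "real \<Rightarrow> nat \<Rightarrow> nat \<Rightarrow> real" where
  "qfalling q m e = (\<Prod>l<e. q^m - q^l)"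

lemma qfalling_0 [simp]: "qfalling q m 0 = 1"
  by (simp add: qfalling_def)

lemma qfalling_Suc: "qfalling q m (Suc e) = qfalling q m e * (q^m - q^e)"
  by (simp add: qfalling_def)

lemma qfalling_Suc_Suc: "qfalling q (Suc m) (Suc e) = (q^(Suc m) - 1) * q^e * qfalling q m e"
proof -
  have "qfalling q (Suc m) (Suc e) = (q^Suc m - q^0) * (\<Prod>l<e. q^Suc m - q^Suc l)"
    unfolding qfalling_def by (rule prod.lessThan_Suc_shift)
  also have "(\<Prod>l<e. q^Suc m - q^Suc l) = (\<Prod>l<e. q * (q^m - q^l))"
    by (simp add: right_diff_distrib)
  also have "\<dots> = q^e * qfalling q m e" by (simp add: qfalling_def prod.distrib)
  finally show ?thesis by simp
qed

lemma qfalling_eq_0: "m < e \<Longrightarrow> qfalling q m e = 0"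
  unfolding qfalling_def by (rule prod_zero) auto

lemma qfalling_pos: "q > 1 \<Longrightarrow> e \<le> m \<Longrightarrow> qfalling q m e > 0"
  unfolding qfalling_def by (rule prod_pos) (auto intro: power_strict_increasing)

lemma span_dim_count_closed:
  assumes Q: "(2::nat) \<le> Q"
  shows "real (span_dim_count Q d n e) * qfalling Q e e = qfalling Q d e * qfalling Q n e"
proof (induction n arbitrary: e)
  case 0
  then show ?case by (cases e) (simp_all add: qfalling_eq_0)
next
  case (Suc n)
  show ?case
  proof (cases e)
    case 0
    then show ?thesis using Suc[of 0] by simp
  next
    case (Suc e')
    let ?x = "real Q"
    let ?D = "qfalling ?x d e'" and ?N = "qfalling ?x n e'"
    have IH1: "real (span_dim_count Q d n (Suc e')) * ((?x^Suc e' - 1) * ?x^e' * qfalling ?x e' e')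
        = ?D * (?x^d - ?x^e') * (?N * (?x^n - ?x^e'))"
      using Suc.IH[of "Suc e'"]
      unfolding qfalling_Suc_Suc[of ?x e' e'] qfalling_Suc[of ?x d e'] qfalling_Suc[of ?x n e'] .
    have IH0: "real (span_dim_count Q d n e') * qfalling ?x e' e' = ?D * ?N" using Suc.IH[of e'] .
    have diff: "real (Q^d - Q^e') * (?D * ?N) = (?x^d - ?x^e') * ?D * ?N"
    proof (cases "e' \<le> d")
      case True
      then have "Q^e' \<le> Q^d" using Q by (intro power_increasing) auto
      then show ?thesis by (simp add: of_nat_diff)
    qed (simp add: qfalling_eq_0)
    have factor: "a * (D * b * (N * c)) + P * (b * D * N) = D * b * N * (a * c + P)"
      for a b c P D N :: real
      by (simp add: algebra_simps)
    have "real (span_dim_count Q d (Suc n) e) * qfalling ?x e e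
       = ?x^Suc e' * (real (span_dim_count Q d n (Suc e')) * ((?x^Suc e' - 1) * ?x^e' * qfalling ?x e' e'))
       + (?x^Suc e' - 1) * ?x^e' * (real (Q^d - Q^e') * (real (span_dim_count Q d n e') * qfalling ?x e' e'))"
    proof -
      have "real (span_dim_count Q d (Suc n) e) * qfalling ?x e e
        = (?x^Suc e' * real (span_dim_count Q d n (Suc e')) + real (Q^d - Q^e') * real (span_dim_count Q d n e'))
          * ((?x^Suc e' - 1) * ?x^e' * qfalling ?x e' e')"
        unfolding Suc qfalling_Suc_Suc by simp
      then show ?thesis by (simp add: ring_distribs mult_ac)
    qed
    also have "\<dots> = ?x^Suc e' * (?D * (?x^d - ?x^e') * (?N * (?x^n - ?x^e')))
       + (?x^Suc e' - 1) * ?x^e' * (real (Q^d - Q^e') * (?D * ?N))"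
      by (simp only: IH1 IH0)
    also have "\<dots> = ?x^Suc e' * (?D * (?x^d - ?x^e') * (?N * (?x^n - ?x^e')))
       + (?x^Suc e' - 1) * ?x^e' * ((?x^d - ?x^e') * ?D * ?N)"
      by (simp only: diff)
    also have "\<dots> = ?D * (?x^d - ?x^e') * ?N * (?x^Suc e' * (?x^n - ?x^e') + (?x^Suc e' - 1) * ?x^e')"
      by (rule factor)
    also have "?x^Suc e' * (?x^n - ?x^e') + (?x^Suc e' - 1) * ?x^e' = (?x^Suc n - 1) * ?x^e'"
      by (simp add: algebra_simps flip: power_add)
    also have "?D * (?x^d - ?x^e') * ?N * ((?x^Suc n - 1) * ?x^e') = qfalling ?x d e * qfalling ?x (Suc n) e"
      unfolding Suc qfalling_Suc_Suc qfalling_Suc[of _ d] by (simp only: mult_ac)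
    finally show ?thesis .
  qed
qed

lemma qbinom_eq_qfalling:
  shows "qbinom (real Q) (int m) (int d) = qfalling (real Q) m d / qfalling (real Q) d d"
proof (cases "m < d")
  case True
  then show ?thesis by (simp add: qbinom_def qfalling_eq_0)
next
  case False
  have "{0..<int d} = {int 0..<int d}" by simp
  hence "(\<Prod>i\<in>{0..<int d}. (real Q powi int m - real Q powi i) / (real Q powi int d - real Q powi i))
     = (\<Prod>i\<in>{0..<d}. (real Q ^ m - real Q ^ i) / (real Q ^ d - real Q ^ i))"
    by (simp only: prod.atLeast_int_lessThan_int_shift) (simp add: power_int_of_nat o_def)
  also have "\<dots> = qfalling (real Q) m d / qfalling (real Q) d d"
    by (simp add: qfalling_def prod_dividef atLeast0LessThan)
  finally show ?thesis using False by (simp add: qbinom_def)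
qed

lemma PiE_image_subset: "u \<in> A \<rightarrow>\<^sub>E W \<Longrightarrow> u ` A \<subseteq> W"
  by (auto simp: PiE_def Pi_def)

lemma card_spanning_tuples:
  fixes W :: "(nat \<Rightarrow> 'a::{field,finite}) set"
  assumes W: "vec.subspace W" "card W = CARD('a)^d" and A: "finite A"
  shows "real (card {u \<in> A \<rightarrow>\<^sub>E W. vec.span (u ` A) = W}) = qfalling (real CARD('a)) (card A) d"
proof -
  have finW: "finite W" using finite_if_card_CARD_power[OF W(2)] .
  have eq: "{u \<in> A \<rightarrow>\<^sub>E W. vec.span (u ` A) = W} = {u \<in> A \<rightarrow>\<^sub>E W. card (vec.span (u ` A)) = CARD('a)^d}"
  proof (rule Collect_cong, rule conj_cong[OF refl])
    fix u assume u: "u \<in> A \<rightarrow>\<^sub>E W"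
    have sub: "vec.span (u`A) \<subseteq> W" by (rule vec.span_minimal[OF PiE_image_subset[OF u] W(1)])
    show "vec.span (u ` A) = W \<longleftrightarrow> card (vec.span (u ` A)) = CARD('a)^d"
      using card_subset_eq[OF finW sub] W(2) by auto
  qed
  have "real (span_dim_count CARD('a) d (card A) d) * qfalling (real CARD('a)) d d
      = qfalling (real CARD('a)) d d * qfalling (real CARD('a)) (card A) d"
    by (rule span_dim_count_closed[OF CARD_field_ge_2])
  moreover have "qfalling (real CARD('a)) d d > 0" by (rule qfalling_pos[OF one_less_real_CARD]) simp
  ultimately show ?thesis unfolding eq card_tuples_by_span[OF W A] by simp
qed

text \<open>Every q^e-element subspace U of W is the span of exactly qfalling q e e tuples indexed by
  {..<e}, so counting those tuples in two ways yields the Gaussian binomial.\<close>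

lemma card_subspaces_of_dim:
  fixes W :: "(nat \<Rightarrow> 'a::{field,finite}) set"
  assumes W: "vec.subspace W" "card W = CARD('a)^d"
  shows "real (card {U. vec.subspace U \<and> U \<subseteq> W \<and> card U = CARD('a)^e})
    = qfalling (real CARD('a)) d e / qfalling (real CARD('a)) e e"
proof -
  let ?q = "CARD('a)" and ?x = "real CARD('a)"
  let ?Sub = "{U. vec.subspace U \<and> U \<subseteq> W \<and> card U = ?q^e}"
  let ?A = "{..<e}"
  let ?T = "{u \<in> ?A \<rightarrow>\<^sub>E W. card (vec.span (u ` ?A)) = ?q^e}"
  let ?span_of = "\<lambda>U. {u \<in> ?A \<rightarrow>\<^sub>E U. vec.span (u`?A) = U}"
  have finW: "finite W" using finite_if_card_CARD_power[OF W(2)] .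
  have p: "qfalling ?x e e > 0" by (rule qfalling_pos[OF one_less_real_CARD]) simp
  have T: "real (card ?T) * qfalling ?x e e = qfalling ?x d e * qfalling ?x e e"
    using card_tuples_by_span[OF W, of ?A e] span_dim_count_closed[OF CARD_field_ge_2, of d e e] by simp
  have finSub: "finite ?Sub" by (rule finite_subset[of _ "Pow W"]) (use finW in auto)
  have Teq: "?T = (\<Union>U\<in>?Sub. ?span_of U)"
  proof (rule set_eqI, rule iffI)
    fix u assume u: "u \<in> ?T"
    let ?U = "vec.span (u`?A)"
    have uA: "u \<in> ?A \<rightarrow>\<^sub>E W" using u by simp
    have "?U \<in> ?Sub"
      using u vec.span_minimal[OF PiE_image_subset[OF uA] W(1)] by (simp add: vec.subspace_span)
    moreover have "u \<in> ?A \<rightarrow>\<^sub>E ?U" using uA by (auto simp: PiE_def Pi_def intro: vec.span_base)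
    ultimately show "u \<in> (\<Union>U\<in>?Sub. ?span_of U)" by blast
  next
    fix u assume "u \<in> (\<Union>U\<in>?Sub. ?span_of U)"
    then obtain U where U: "U \<in> ?Sub" "u \<in> ?A \<rightarrow>\<^sub>E U" "vec.span (u`?A) = U" by blast
    have "u \<in> ?A \<rightarrow>\<^sub>E W" using U(1,2) by (auto simp: PiE_def Pi_def)
    then show "u \<in> ?T" using U by simp
  qed
  have "card ?T = (\<Sum>U\<in>?Sub. card (?span_of U))"
    unfolding Teq
    by (rule card_UN_disjoint[OF finSub]) (use finW in \<open>auto intro!: finite_PiE intro: finite_subset\<close>)
  hence "real (card ?T) = (\<Sum>U\<in>?Sub. real (card (?span_of U)))" by simp
  also have "\<dots> = (\<Sum>U\<in>?Sub. qfalling ?x e e)"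
  proof (rule sum.cong[OF refl])
    fix U assume "U \<in> ?Sub"
    thus "real (card (?span_of U)) = qfalling ?x e e" using card_spanning_tuples[of U e ?A] by simp
  qed
  also have "\<dots> = real (card ?Sub) * qfalling ?x e e" by simp
  finally have "real (card ?Sub) * qfalling ?x e e * qfalling ?x e e = qfalling ?x d e * qfalling ?x e e"
    using T by simp
  then show ?thesis using p by (simp add: field_simps)
qed
section \<open>Coordinate subspaces and standard basis vectors\<close>

definition coord_space :: "nat set \<Rightarrow> (nat \<Rightarrow> 'a::zero) set" where
  "coord_space C = {f. \<forall>j. j \<notin> C \<longrightarrow> f j = 0}"
definition std_vec :: "nat \<Rightarrow> nat \<Rightarrow> 'a::zero_neq_one" where
  "std_vec i = (\<lambda>j. if j = i then 1 else 0)"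
definition coord_proj :: "nat set \<Rightarrow> (nat \<Rightarrow> 'a::zero) \<Rightarrow> nat \<Rightarrow> 'a" where
  "coord_proj C x = (\<lambda>i. if i \<in> C then x i else 0)"

lemma subspace_coord_space: "vec.subspace (coord_space C :: (nat \<Rightarrow> 'a::field) set)"
  unfolding vec.subspace_def coord_space_def by (auto simp: zero_fun_def plus_fun_def)

lemma card_coord_space:
  assumes "finite C"
  shows "card (coord_space C :: (nat \<Rightarrow> 'a::{field,finite}) set) = CARD('a)^card C"
proof -
  have "bij_betw (\<lambda>f. restrict f C) (coord_space C :: (nat \<Rightarrow> 'a) set) (C \<rightarrow>\<^sub>E (UNIV::'a set))"
    by (rule bij_betw_byWitness[where f'="\<lambda>h j. if j \<in> C then h j else 0"])
       (auto simp: coord_space_def fun_eq_iff PiE_def extensional_def)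
  hence "card (coord_space C :: (nat \<Rightarrow> 'a) set) = card (C \<rightarrow>\<^sub>E (UNIV::'a set))" by (rule bij_betw_same_card)
  also have "\<dots> = CARD('a)^card C" using assms by (simp add: card_funcsetE)
  finally show ?thesis .
qed

lemma sum_fun_apply: "(sum f A) x = (\<Sum>a\<in>A. f a x)"
  by (induction A rule: infinite_finite_induct) auto

lemma coord_proj_decomp:
  fixes x :: "nat \<Rightarrow> 'a::field"
  assumes "finite J"
  shows "x = coord_proj (- J) x + (\<Sum>j\<in>J. (\<lambda>i. x j * std_vec j i))"
proof (rule ext)
  fix i
  have "(\<Sum>j\<in>J. (\<lambda>i. x j * std_vec j i)) i = (\<Sum>j\<in>J. if i = j then x j else 0)"
    unfolding sum_fun_apply by (rule sum.cong) (auto simp: std_vec_def)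
  also have "\<dots> = (if i \<in> J then x i else 0)" using assms by (simp add: sum.delta')
  finally show "x i = (coord_proj (- J) x + (\<Sum>j\<in>J. (\<lambda>i. x j * std_vec j i))) i" by (simp add: coord_proj_def)
qed

lemma subspace_mem_iff_coord_proj:
  fixes U :: "(nat \<Rightarrow> 'a::field) set"
  assumes U: "vec.subspace U" and J: "finite J" "\<forall>j\<in>J. std_vec j \<in> U"
  shows "x \<in> U \<longleftrightarrow> coord_proj (- J) x \<in> U"
proof -
  have s: "(\<Sum>j\<in>J. (\<lambda>i. x j * std_vec j i)) \<in> U"
    by (rule vec.subspace_sum[OF U]) (use J in \<open>auto intro: vec.subspace_scale[OF U]\<close>)
  have "coord_proj (- J) x = x - (\<Sum>j\<in>J. (\<lambda>i. x j * std_vec j i))"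
    using coord_proj_decomp[OF J(1), of x] by (simp add: algebra_simps)
  then show ?thesis using coord_proj_decomp[OF J(1), of x] s
    by (metis U vec.subspace_add vec.subspace_diff)
qed

lemma card_coord_proj_preimage:
  fixes U' :: "(nat \<Rightarrow> 'a::{field,finite}) set"
  assumes J: "J \<subseteq> C" "finite J" and U': "U' \<subseteq> coord_space (C - J)"
  shows "card {x \<in> coord_space C. coord_proj (- J) x \<in> U'} = card U' * CARD('a)^card J"
proof -
  define separate where "separate x = (coord_proj (- J) x, restrict x J)" for x :: "nat \<Rightarrow> 'a"
  define glue where "glue = (\<lambda>(y, g) i. if i \<in> J then g i else (y i :: 'a))"
  have y0: "y i = 0" if "y \<in> U'" "i \<in> J \<or> i \<notin> C" for y i
    using that U' by (auto simp: coord_space_def)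
  have "bij_betw separate {x \<in> coord_space C. coord_proj (- J) x \<in> U'} (U' \<times> (J \<rightarrow>\<^sub>E UNIV))"
  proof (rule bij_betw_byWitness[where f'=glue])
    show "\<forall>x\<in>{x \<in> coord_space C. coord_proj (- J) x \<in> U'}. glue (separate x) = x"
      by (auto simp: glue_def separate_def coord_proj_def fun_eq_iff)
    show "\<forall>p\<in>U' \<times> (J \<rightarrow>\<^sub>E UNIV). separate (glue p) = p"
      using y0 by (fastforce simp: glue_def separate_def coord_proj_def fun_eq_iff PiE_def extensional_def)
    show "separate ` {x \<in> coord_space C. coord_proj (- J) x \<in> U'} \<subseteq> U' \<times> (J \<rightarrow>\<^sub>E UNIV)"
      by (auto simp: separate_def)
    show "glue ` (U' \<times> (J \<rightarrow>\<^sub>E UNIV)) \<subseteq> {x \<in> coord_space C. coord_proj (- J) x \<in> U'}"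
    proof clarify
      fix y and g :: "nat \<Rightarrow> 'a" assume "y \<in> U'"
      moreover have "coord_proj (- J) (glue (y, g)) = y"
        using y0[OF \<open>y \<in> U'\<close>] by (auto simp: glue_def coord_proj_def fun_eq_iff)
      moreover have "glue (y, g) \<in> coord_space C"
        using y0[OF \<open>y \<in> U'\<close>] J(1) by (auto simp: glue_def coord_space_def)
      ultimately show "glue (y, g) \<in> coord_space C \<and> coord_proj (- J) (glue (y, g)) \<in> U'" by simp
    qed
  qed
  then have "card {x \<in> coord_space C. coord_proj (- J) x \<in> U'} = card (U' \<times> (J \<rightarrow>\<^sub>E (UNIV::'a set)))"
    by (rule bij_betw_same_card)
  also have "\<dots> = card U' * CARD('a)^card J" using J(2) by (simp add: card_cartesian_product card_funcsetE)
  finally show ?thesis .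
qed

lemma std_vec_in_coord_space: "j \<in> C \<Longrightarrow> std_vec j \<in> coord_space C"
  by (simp add: coord_space_def std_vec_def)

lemma subspace_coord_proj_preimage:
  assumes U': "vec.subspace (U' :: (nat \<Rightarrow> 'a::field) set)"
  shows "vec.subspace {x \<in> coord_space C. coord_proj (- J) x \<in> U'}"
proof -
  have z: "coord_proj (- J) 0 = (0 :: nat \<Rightarrow> 'a)" by (simp add: coord_proj_def fun_eq_iff)
  have a: "coord_proj (- J) (x + y) = coord_proj (- J) x + coord_proj (- J) y" for x y :: "nat \<Rightarrow> 'a"
    by (simp add: coord_proj_def fun_eq_iff)
  have s: "coord_proj (- J) (\<lambda>j. c * x j) = (\<lambda>j. c * coord_proj (- J) x j)" for c and x :: "nat \<Rightarrow> 'a"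
    by (simp add: coord_proj_def fun_eq_iff)
  show ?thesis using subspace_coord_space[of C] U' unfolding vec.subspace_def by (simp add: z a s) blast
qed

lemma coord_proj_preimage_inter:
  fixes U :: "(nat \<Rightarrow> 'a::field) set"
  assumes U: "vec.subspace U" "U \<subseteq> coord_space C" and J: "finite J" "\<forall>j\<in>J. std_vec j \<in> U"
  shows "{x \<in> coord_space C. coord_proj (- J) x \<in> U \<inter> coord_space (C - J)} = U"
proof -
  have "coord_proj (- J) x \<in> coord_space (C - J)" if "x \<in> coord_space C" for x :: "nat \<Rightarrow> 'a"
    using that by (auto simp: coord_space_def coord_proj_def)
  then show ?thesis using subspace_mem_iff_coord_proj[OF U(1) J] U(2) by blast
qed

lemma inter_coord_proj_preimage:
  fixes U' :: "(nat \<Rightarrow> 'a::zero) set"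
  assumes "U' \<subseteq> coord_space (C - J)"
  shows "{x \<in> coord_space C. coord_proj (- J) x \<in> U'} \<inter> coord_space (C - J) = U'"
proof -
  have "coord_proj (- J) x = x" if "x \<in> coord_space (C - J)" for x :: "nat \<Rightarrow> 'a"
    using that by (auto simp: coord_space_def coord_proj_def fun_eq_iff)
  moreover have "coord_space (C - J) \<subseteq> (coord_space C :: (nat \<Rightarrow> 'a) set)"
    by (auto simp: coord_space_def)
  ultimately show ?thesis using assms by auto
qed

text \<open>Intersecting with the coordinates outside J is a bijection from the q^e-element subspaces
  containing the std_vec j, j \<in> J, onto the q^(e - card J)-element subspaces of coord_space (C - J).\<close>

lemma card_subspaces_containing_std_vecs:
  fixes C J :: "nat set" and e :: nat
  assumes C: "finite C" and J: "J \<subseteq> C"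
  shows "real (card {U :: (nat \<Rightarrow> 'a::{field,finite}) set. vec.subspace U \<and> U \<subseteq> coord_space C
      \<and> card U = CARD('a)^e \<and> (\<forall>j\<in>J. std_vec j \<in> U)})
    = qbinom (real CARD('a)) (int (card C - card J)) (int e - int (card J))"
proof -
  let ?q = "CARD('a)"
  let ?S1 = "{U :: (nat \<Rightarrow> 'a) set. vec.subspace U \<and> U \<subseteq> coord_space C \<and> card U = ?q^e
    \<and> (\<forall>j\<in>J. std_vec j \<in> U)}"
  let ?phi = "\<lambda>U. U \<inter> coord_space (C - J)"
  let ?psi = "\<lambda>U'. {x \<in> coord_space C. coord_proj (- J) x \<in> U'}"
  have finJ: "finite J" using finite_subset[OF J C] .
  have psi_phi: "?psi (?phi U) = U" if "U \<in> ?S1" for U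
    using coord_proj_preimage_inter[of U C J] that finJ by simp
  have cardU: "card U = card (?phi U) * ?q^card J" if U: "U \<in> ?S1" for U
    using card_coord_proj_preimage[OF J finJ, of "?phi U"] psi_phi[OF U] by simp
  show ?thesis
  proof (cases "e < card J")
    case True
    have empty: "?S1 = {}"
    proof (rule ccontr)
      assume "?S1 \<noteq> {}"
      then obtain U where U: "U \<in> ?S1" by blast
      have "finite (?phi U)" using U finite_if_card_CARD_power[where 'a='a, of U e] by simp
      moreover have "0 \<in> ?phi U" using U vec.subspace_0 subspace_coord_space[of "C - J"] by auto
      ultimately have "card (?phi U) \<ge> 1" by (simp add: Suc_le_eq card_gt_0_iff) blast
      hence "?q^card J \<le> card (?phi U) * ?q^card J" by simp
      also have "\<dots> = ?q^e" using cardU[OF U] U by simp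
      finally have "?q^card J \<le> ?q^e" .
      with True show False using CARD_power_le_iff[where 'a='a] by simp
    qed
    show ?thesis unfolding empty using True by (simp add: qbinom_def)
  next
    case False
    define e' where "e' = e - card J"
    have e_split: "e = e' + card J" using False by (simp add: e'_def)
    let ?S2 = "{U' :: (nat \<Rightarrow> 'a) set. vec.subspace U' \<and> U' \<subseteq> coord_space (C - J) \<and> card U' = ?q^e'}"
    have "bij_betw ?phi ?S1 ?S2"
    proof (rule bij_betw_byWitness[where f'="?psi"])
      show "\<forall>U\<in>?S1. ?psi (?phi U) = U" using psi_phi by blast
      show "\<forall>U'\<in>?S2. ?phi (?psi U') = U'" using inter_coord_proj_preimage by blast
      show "?phi ` ?S1 \<subseteq> ?S2"
      proof (rule image_subsetI)
        fix U assume U: "U \<in> ?S1"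
        have "card (?phi U) * ?q^card J = ?q^e' * ?q^card J"
          using cardU[OF U] U by (simp add: e_split power_add)
        then show "?phi U \<in> ?S2"
          using U subspace_coord_space by (auto intro: vec.subspace_inter)
      qed
      show "?psi ` ?S2 \<subseteq> ?S1"
      proof (rule image_subsetI)
        fix U' assume U': "U' \<in> ?S2"
        have "std_vec j \<in> ?psi U'" if "j \<in> J" for j
        proof -
          have "coord_proj (- J) (std_vec j) = (0 :: nat \<Rightarrow> 'a)"
            using that by (auto simp: coord_proj_def std_vec_def fun_eq_iff)
          then show ?thesis using that J U' vec.subspace_0 std_vec_in_coord_space by auto
        qed
        then show "?psi U' \<in> ?S1"
          using U' card_coord_proj_preimage[OF J finJ, of U']
          by (auto simp: e_split power_add intro: subspace_coord_proj_preimage)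
      qed
    qed
    hence "card ?S1 = card ?S2" by (rule bij_betw_same_card)
    hence "real (card ?S1) = qfalling (real ?q) (card (C - J)) e' / qfalling (real ?q) e' e'"
      using card_subspaces_of_dim[OF subspace_coord_space card_coord_space[of "C - J"]] C by simp
    also have "\<dots> = qbinom (real ?q) (int (card (C - J))) (int e')" by (rule qbinom_eq_qfalling[symmetric])
    finally show ?thesis using finJ J by (simp add: card_Diff_subset e_split)
  qed
qed
lemma card_filter_eq_sum_fibres:
  assumes X: "finite X" and fY: "f ` X \<subseteq> Y" and Y: "finite Y"
  shows "card {x\<in>X. Q (f x)} = (\<Sum>y\<in>{y\<in>Y. Q y}. card {x\<in>X. f x = y})"
proof -
  have "{x\<in>X. Q (f x)} = (\<Union>y\<in>{y\<in>Y. Q y}. {x\<in>X. f x = y})" using fY by auto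
  hence "card {x\<in>X. Q (f x)} = card (\<Union>y\<in>{y\<in>Y. Q y}. {x\<in>X. f x = y})" by simp
  also have "\<dots> = (\<Sum>y\<in>{y\<in>Y. Q y}. card {x\<in>X. f x = y})"
    by (rule card_UN_disjoint) (use X Y in auto)
  finally show ?thesis .
qed

lemma sum_Pow_alternating:
  assumes "finite A"
  shows "(\<Sum>X\<in>Pow A. (-1::real)^card X) = (if A = {} then 1 else 0)"
proof -
  have "(\<Prod>x\<in>A. (1::real) - 1) = (\<Sum>X\<in>Pow A. (- 1) ^ card X * prod (\<lambda>_. 1) X * prod (\<lambda>_. 1) (A - X))"
    by (rule prod_diff_conv_sum[OF assms])
  hence e: "(\<Sum>X\<in>Pow A. (-1::real)^card X) = 0^card A" by simp
  show ?thesis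
  proof (cases "A = {}")
    case False
    then have "card A > 0" using assms by (simp add: card_gt_0_iff)
    then show ?thesis using e False by simp
  qed simp
qed

lemma card_eq_inclusion_exclusion:
  fixes g :: "'x \<Rightarrow> 'b set"
  assumes X: "finite X" and C: "finite C" and gC: "\<forall>x\<in>X. g x \<subseteq> C"
  shows "real (card {x\<in>X. g x = B})
    = (\<Sum>K\<in>Pow (C - B). (-1)^card K * real (card {x\<in>X. B \<union> K \<subseteq> g x}))"
proof -
  have "(\<Sum>K\<in>Pow (C - B). (-1)^card K * real (card {x\<in>X. B \<union> K \<subseteq> g x}))
     = (\<Sum>K\<in>Pow (C - B). \<Sum>x\<in>X. if B \<union> K \<subseteq> g x then (-1)^card K else (0::real))"
    using X by (simp add: sum.inter_filter[symmetric] mult.commute)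
  also have "\<dots> = (\<Sum>x\<in>X. \<Sum>K\<in>Pow (C - B). if B \<union> K \<subseteq> g x then (-1)^card K else (0::real))"
    by (rule sum.swap)
  also have "\<dots> = (\<Sum>x\<in>X. if g x = B then 1 else (0::real))"
  proof (rule sum.cong[OF refl])
    fix x assume x: "x \<in> X"
    have "(\<Sum>K\<in>Pow (C - B). if B \<union> K \<subseteq> g x then (-1)^card K else (0::real))
       = (\<Sum>K\<in>{K\<in>Pow (C - B). B \<union> K \<subseteq> g x}. (-1::real)^card K)"
      by (rule sum.inter_filter[symmetric]) (use C in simp)
    also have "{K\<in>Pow (C - B). B \<union> K \<subseteq> g x} = (if B \<subseteq> g x then Pow (g x - B) else {})"
      using gC x by auto
    also have "(\<Sum>K\<in>(if B \<subseteq> g x then Pow (g x - B) else {}). (-1::real)^card K)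
       = (if g x = B then 1 else 0)"
    proof (cases "B \<subseteq> g x")
      case True
      have "finite (g x - B)" using gC x C finite_subset by blast
      then show ?thesis using sum_Pow_alternating[of "g x - B"] True by auto
    qed auto
    finally show "(\<Sum>K\<in>Pow (C - B). if B \<union> K \<subseteq> g x then (-1)^card K else (0::real))
       = (if g x = B then 1 else 0)" .
  qed
  also have "\<dots> = real (card {x\<in>X. g x = B})" using X by (simp add: sum.inter_filter[symmetric])
  finally show ?thesis by simp
qed

lemma sum_Pow_card:
  fixes h :: "nat \<Rightarrow> real"
  assumes D: "finite D"
  shows "(\<Sum>K\<in>Pow D. h (card K)) = (\<Sum>j\<le>card D. real (card D choose j) * h j)"
proof -
  have "(\<Sum>K\<in>Pow D. h (card K)) = (\<Sum>j\<in>{..card D}. \<Sum>K\<in>{K. K \<in> Pow D \<and> card K = j}. h (card K))"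
    by (rule sum.group[symmetric]) (use D in \<open>auto intro: card_mono\<close>)
  also have "\<dots> = (\<Sum>j\<le>card D. real (card D choose j) * h j)"
  proof (rule sum.cong[OF refl])
    fix j
    have "{K. K \<in> Pow D \<and> card K = j} = {K. K \<subseteq> D \<and> card K = j}" by auto
    then show "(\<Sum>K\<in>{K. K \<in> Pow D \<and> card K = j}. h (card K)) = real (card D choose j) * h j"
      using n_subsets[OF D, of j] by simp
  qed
  finally show ?thesis .
qed

section \<open>Subspaces by the standard basis vectors they contain\<close>

text \<open>exact_std_vecs_count q m i e is the number of q^e-element subspaces of an m-dimensional
  coordinate space that contain std_vec j for exactly the j in a prescribed i-element set, and
  recovering_tuples_count q m n t the number of n-tuples there whose span contains at least t
  standard basis vectors.\<close>

definition exact_std_vecs_count :: "real \<Rightarrow> nat \<Rightarrow> nat \<Rightarrow> nat \<Rightarrow> real" where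
  "exact_std_vecs_count q m i e =
     (\<Sum>j\<le>m-i. (-1)^j * real ((m-i) choose j) * qbinom q (int (m-i-j)) (int e - int i - int j))"

definition recovering_tuples_count :: "real \<Rightarrow> nat \<Rightarrow> nat \<Rightarrow> nat \<Rightarrow> real" where
  "recovering_tuples_count q m n t =
     (\<Sum>e\<le>m. qfalling q n e * (\<Sum>i\<in>{t..m}. real (m choose i) * exact_std_vecs_count q m i e))"

lemma finite_coord_space: "finite C \<Longrightarrow> finite (coord_space C :: (nat \<Rightarrow> 'a::{field,finite}) set)"
  using finite_if_card_CARD_power[OF card_coord_space] by blast

lemma card_subspaces_exact_std_vecs:
  fixes C B :: "nat set" and e :: nat
  assumes C: "finite C" and B: "B \<subseteq> C"
  shows "real (card {U :: (nat \<Rightarrow> 'a::{field,finite}) set.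
      (vec.subspace U \<and> U \<subseteq> coord_space C \<and> card U = CARD('a)^e) \<and> {j\<in>C. std_vec j \<in> U} = B})
    = exact_std_vecs_count (real CARD('a)) (card C) (card B) e"
proof -
  let ?q = "real CARD('a)"
  let ?S = "{U :: (nat \<Rightarrow> 'a) set. vec.subspace U \<and> U \<subseteq> coord_space C \<and> card U = CARD('a)^e}"
  let ?f = "\<lambda>k. (-1)^k * qbinom ?q (int (card C - card B - k)) (int e - int (card B) - int k)"
  have finS: "finite ?S" by (rule finite_subset[of _ "Pow (coord_space C)"]) (use finite_coord_space[OF C] in auto)
  have finB: "finite B" using finite_subset[OF B C] .
  have "real (card {U\<in>?S. {j\<in>C. std_vec j \<in> U} = B})
      = (\<Sum>K\<in>Pow (C - B). (-1)^card K * real (card {U\<in>?S. B \<union> K \<subseteq> {j\<in>C. std_vec j \<in> U}}))"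
    by (rule card_eq_inclusion_exclusion[OF finS C]) auto
  also have "\<dots> = (\<Sum>K\<in>Pow (C - B). ?f (card K))"
  proof (rule sum.cong[OF refl])
    fix K assume K: "K \<in> Pow (C - B)"
    have BK: "B \<union> K \<subseteq> C" using K B by auto
    have "card (B \<union> K) = card B + card K"
      using K finB finite_subset[of K C] C by (subst card_Un_disjoint) auto
    moreover have "{U\<in>?S. B \<union> K \<subseteq> {j\<in>C. std_vec j \<in> U}} = {U. vec.subspace U \<and> U \<subseteq> coord_space C
        \<and> card U = CARD('a)^e \<and> (\<forall>j\<in>B \<union> K. std_vec j \<in> U)}"
      using K B by auto
    ultimately show "(-1)^card K * real (card {U\<in>?S. B \<union> K \<subseteq> {j\<in>C. std_vec j \<in> U}}) = ?f (card K)"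
      using card_subspaces_containing_std_vecs[OF C BK, of e, where 'a='a] by (simp add: algebra_simps)
  qed
  also have "\<dots> = (\<Sum>j\<le>card (C - B). real (card (C - B) choose j) * ?f j)"
    by (rule sum_Pow_card) (use C in auto)
  also have "\<dots> = exact_std_vecs_count ?q (card C) (card B) e"
    unfolding exact_std_vecs_count_def using card_Diff_subset[OF finB B] by (simp add: algebra_simps)
  finally show ?thesis by simp
qed

lemma card_subspaces_many_std_vecs:
  fixes C :: "nat set"
  assumes C: "finite C"
  shows "real (card {U :: (nat \<Rightarrow> 'a::{field,finite}) set.
      (vec.subspace U \<and> U \<subseteq> coord_space C \<and> card U = CARD('a)^e) \<and> t \<le> card {j\<in>C. std_vec j \<in> U}})
    = (\<Sum>i\<in>{t..card C}. real (card C choose i) * exact_std_vecs_count (real CARD('a)) (card C) i e)"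
proof -
  let ?S = "{U :: (nat \<Rightarrow> 'a) set. vec.subspace U \<and> U \<subseteq> coord_space C \<and> card U = CARD('a)^e}"
  let ?N = "\<lambda>i. exact_std_vecs_count (real CARD('a)) (card C) i e"
  have finS: "finite ?S" by (rule finite_subset[of _ "Pow (coord_space C)"]) (use finite_coord_space[OF C] in auto)
  have "card {U\<in>?S. t \<le> card {j\<in>C. std_vec j \<in> U}}
      = (\<Sum>B\<in>{B\<in>Pow C. t \<le> card B}. card {U\<in>?S. {j\<in>C. std_vec j \<in> U} = B})"
    by (rule card_filter_eq_sum_fibres[OF finS]) (use C in auto)
  hence "real (card {U\<in>?S. t \<le> card {j\<in>C. std_vec j \<in> U}})
      = (\<Sum>B\<in>{B\<in>Pow C. t \<le> card B}. real (card {U\<in>?S. {j\<in>C. std_vec j \<in> U} = B}))"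
    by simp
  also have "\<dots> = (\<Sum>B\<in>{B\<in>Pow C. t \<le> card B}. ?N (card B))"
    by (rule sum.cong[OF refl]) (use card_subspaces_exact_std_vecs[OF C] in auto)
  also have "\<dots> = (\<Sum>B\<in>Pow C. if t \<le> card B then ?N (card B) else 0)"
    by (rule sum.inter_filter) (use C in simp)
  also have "\<dots> = (\<Sum>j\<le>card C. real (card C choose j) * (if t \<le> j then ?N j else 0))"
    by (rule sum_Pow_card[OF C])
  also have "\<dots> = (\<Sum>j\<le>card C. if t \<le> j then real (card C choose j) * ?N j else 0)"
    by (rule sum.cong) auto
  also have "\<dots> = (\<Sum>j\<in>{j\<in>{..card C}. t \<le> j}. real (card C choose j) * ?N j)"
    by (rule sum.inter_filter[symmetric]) simp
  also have "{j\<in>{..card C}. t \<le> j} = {t..card C}" by auto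
  finally show ?thesis by simp
qed

lemma span_tuple_in_subspaces:
  fixes u :: "'b \<Rightarrow> nat \<Rightarrow> 'a::{field,finite}"
  assumes C: "finite C" and A: "finite A" and u: "u \<in> A \<rightarrow>\<^sub>E coord_space C"
  shows "\<exists>e\<le>card C. vec.subspace (vec.span (u ` A)) \<and> vec.span (u ` A) \<subseteq> coord_space C
    \<and> card (vec.span (u ` A)) = CARD('a)^e"
proof -
  have sub: "vec.span (u ` A) \<subseteq> coord_space C"
    by (rule vec.span_minimal[OF PiE_image_subset[OF u] subspace_coord_space])
  obtain e where e: "card (vec.span (u ` A)) = CARD('a)^e" using card_span_power[of "u ` A"] A by auto
  have "CARD('a)^e \<le> card (coord_space C :: (nat \<Rightarrow> 'a) set)"
    using card_mono[OF finite_coord_space[OF C] sub] e by simp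
  also have "\<dots> = CARD('a)^card C" by (rule card_coord_space[OF C])
  finally have "CARD('a)^e \<le> CARD('a)^card C" .
  then show ?thesis using sub e CARD_power_le_iff[where 'a='a] by (auto simp: vec.subspace_span)
qed

lemma card_tuples_spanning_subspace:
  fixes U :: "(nat \<Rightarrow> 'a::{field,finite}) set"
  assumes U: "vec.subspace U" "U \<subseteq> coord_space C" "card U = CARD('a)^e" and A: "finite A"
  shows "real (card {u \<in> A \<rightarrow>\<^sub>E coord_space C. vec.span (u ` A) = U}) = qfalling (real CARD('a)) (card A) e"
proof -
  have "{u \<in> A \<rightarrow>\<^sub>E coord_space C. vec.span (u ` A) = U} = {u \<in> A \<rightarrow>\<^sub>E U. vec.span (u ` A) = U}"
    using U(2) by (auto simp: PiE_def Pi_def intro: vec.span_base)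
  then show ?thesis using card_spanning_tuples[OF U(1,3) A] by simp
qed

lemma card_tuples_recovering:
  fixes C :: "nat set" and A :: "'b set" and t :: nat
  assumes C: "finite C" and A: "finite A"
  shows "real (card {u \<in> A \<rightarrow>\<^sub>E (coord_space C :: (nat \<Rightarrow> 'a::{field,finite}) set).
      t \<le> card {j\<in>C. std_vec j \<in> vec.span (u ` A)}})
    = recovering_tuples_count (real CARD('a)) (card C) (card A) t"
proof -
  let ?q = "CARD('a)" and ?m = "card C"
  let ?X = "A \<rightarrow>\<^sub>E (coord_space C :: (nat \<Rightarrow> 'a) set)"
  let ?Sp = "\<lambda>e. {U :: (nat \<Rightarrow> 'a) set. vec.subspace U \<and> U \<subseteq> coord_space C \<and> card U = ?q^e}"
  let ?P = "\<lambda>U. t \<le> card {j\<in>C. std_vec j \<in> U}"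
  have finX: "finite ?X"
    using A finite_coord_space[OF C, where 'a='a] by (simp add: finite_PiE)
  have "card {u\<in>?X. ?P (vec.span (u ` A))}
      = (\<Sum>U\<in>{U\<in>(\<Union>e\<in>{..?m}. ?Sp e). ?P U}. card {u\<in>?X. vec.span (u ` A) = U})"
  proof (rule card_filter_eq_sum_fibres[OF finX])
    show "(\<lambda>u. vec.span (u ` A)) ` ?X \<subseteq> (\<Union>e\<in>{..?m}. ?Sp e)"
    proof (rule image_subsetI)
      fix u assume "u \<in> ?X"
      then show "vec.span (u ` A) \<in> (\<Union>e\<in>{..?m}. ?Sp e)"
        using span_tuple_in_subspaces[OF C A, where 'a='a] by blast
    qed
    show "finite (\<Union>e\<in>{..?m}. ?Sp e)"
      by (rule finite_subset[of _ "Pow (coord_space C)"]) (use finite_coord_space[OF C, where 'a='a] in auto)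
  qed
  also have "{U\<in>(\<Union>e\<in>{..?m}. ?Sp e). ?P U} = (\<Union>e\<in>{..?m}. {U\<in>?Sp e. ?P U})" by auto
  also have "(\<Sum>U\<in>(\<Union>e\<in>{..?m}. {U\<in>?Sp e. ?P U}). card {u\<in>?X. vec.span (u ` A) = U})
      = (\<Sum>e\<in>{..?m}. \<Sum>U\<in>{U\<in>?Sp e. ?P U}. card {u\<in>?X. vec.span (u ` A) = U})"
    by (rule sum.UNION_disjoint)
      (use finite_Pow_iff[THEN iffD2, OF finite_coord_space[OF C, where 'a='a]] CARD_power_eq_iff[where 'a='a] in auto)
  finally have "real (card {u\<in>?X. ?P (vec.span (u ` A))})
      = (\<Sum>e\<in>{..?m}. \<Sum>U\<in>{U\<in>?Sp e. ?P U}. real (card {u\<in>?X. vec.span (u ` A) = U}))"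
    by simp
  also have "\<dots> = (\<Sum>e\<in>{..?m}. qfalling (real ?q) (card A) e * real (card {U\<in>?Sp e. ?P U}))"
  proof (rule sum.cong[OF refl])
    fix e
    have "real (card {u\<in>?X. vec.span (u ` A) = U}) = qfalling (real ?q) (card A) e"
      if "U \<in> {U\<in>?Sp e. ?P U}" for U
      using that card_tuples_spanning_subspace[OF _ _ _ A, of U C e] by simp
    then show "(\<Sum>U\<in>{U\<in>?Sp e. ?P U}. real (card {u\<in>?X. vec.span (u ` A) = U}))
      = qfalling (real ?q) (card A) e * real (card {U\<in>?Sp e. ?P U})" by simp
  qed
  also have "\<dots> = recovering_tuples_count (real ?q) ?m (card A) t"
    unfolding recovering_tuples_count_def using card_subspaces_many_std_vecs[OF C, where 'a='a] by simp
  finally show ?thesis .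
qed

section \<open>The recovered source packets\<close>

lemma sum_scaled_in_span:
  fixes f :: "'b \<Rightarrow> nat \<Rightarrow> 'a::field"
  shows "(\<Sum>t\<in>T. (\<lambda>j. d t * f t j)) \<in> vec.span (f ` T)"
  by (rule vec.span_sum) (auto intro: vec.span_scale vec.span_base)

lemma span_image_coeffs:
  fixes f :: "'b \<Rightarrow> nat \<Rightarrow> 'a::field" and T :: "'b set"
  assumes T: "finite T" and x: "x \<in> vec.span (f ` T)"
  shows "\<exists>d. x = (\<Sum>t\<in>T. (\<lambda>j. d t * f t j))"
proof -
  obtain u where u: "x = (\<Sum>w\<in>f ` T. (\<lambda>j. u w * w j))"
    using x vec.span_finite[of "f ` T"] T by auto
  define r where "r = inv_into T f"
  define d where "d t = (if r (f t) = t then u (f t) else 0)" for t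
  have r: "r w \<in> T" "f (r w) = w" if "w \<in> f ` T" for w
    using that by (auto simp: r_def inv_into_into f_inv_into_f)
  have "(\<Sum>t\<in>T. (\<lambda>j. d t * f t j)) = (\<Sum>t\<in>r ` f ` T. (\<lambda>j. u (f t) * f t j))"
  proof (rule sum.mono_neutral_cong_right[OF T])
    show "r ` f ` T \<subseteq> T" using r by auto
    show "\<forall>t\<in>T - r ` f ` T. (\<lambda>j. d t * f t j) = 0"
    proof
      fix t assume "t \<in> T - r ` f ` T"
      then have "r (f t) \<noteq> t" by (metis DiffD1 DiffD2 image_eqI)
      then show "(\<lambda>j. d t * f t j) = 0" by (simp add: d_def fun_eq_iff)
    qed
    show "(\<lambda>j. d t * f t j) = (\<lambda>j. u (f t) * f t j)" if "t \<in> r ` f ` T" for t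
      using that r by (auto simp: d_def)
  qed
  also have "\<dots> = (\<Sum>w\<in>f ` T. (\<lambda>j. u (f (r w)) * f (r w) j))"
    using sum.reindex[OF inj_on_inv_into[of "f ` T" f T], folded r_def] by (simp add: o_def)
  also have "\<dots> = (\<Sum>w\<in>f ` T. (\<lambda>j. u w * w j))"
    using r by (intro sum.cong) auto
  finally show ?thesis using u by (intro exI[of _ d]) simp
qed

lemma coding_vec_combination:
  fixes v :: "nat \<Rightarrow> nat \<Rightarrow> 'a::field"
  assumes S: "finite S" and j: "j < k"
  shows "(\<Sum>p\<in>S. c p * coding_vec k v p j)
    = (if j \<in> S then c j else 0) + (\<Sum>t\<in>(\<lambda>p. p - k) ` (S - {0..<k}). c (t + k) * v t j)"
proof -
  have injT: "inj_on (\<lambda>p. p - k) (S - {0..<k})" by (auto simp: inj_on_def)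
  have "(\<Sum>p\<in>S. c p * coding_vec k v p j)
      = (\<Sum>p\<in>S \<inter> {0..<k}. c p * coding_vec k v p j) + (\<Sum>p\<in>S - {0..<k}. c p * coding_vec k v p j)"
    by (rule sum.Int_Diff[OF S])
  also have "(\<Sum>p\<in>S \<inter> {0..<k}. c p * coding_vec k v p j) = (\<Sum>p\<in>S \<inter> {0..<k}. if j = p then c p else 0)"
    using j by (intro sum.cong refl) (auto simp: coding_vec_def unit_vec_def)
  also have "\<dots> = (if j \<in> S then c j else 0)" using S j by (simp add: sum.delta)
  also have "(\<Sum>p\<in>S - {0..<k}. c p * coding_vec k v p j) = (\<Sum>p\<in>S - {0..<k}. c (p - k + k) * v (p - k) j)"
    by (intro sum.cong refl) (auto simp: coding_vec_def)
  also have "\<dots> = (\<Sum>t\<in>(\<lambda>p. p - k) ` (S - {0..<k}). c (t + k) * v t j)"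
    using sum.reindex[OF injT, of "\<lambda>t. c (t + k) * v t j"] by (simp add: o_def)
  finally show ?thesis .
qed

text \<open>Subtracting multiples of the received source packets clears their coordinates in the
  received coded vectors.\<close>

lemma recovered_eq:
  fixes v :: "nat \<Rightarrow> nat \<Rightarrow> 'a::field"
  assumes S: "finite S"
  shows "recovered k v S = (S \<inter> {0..<k}) \<union> {i\<in>{0..<k} - S.
     std_vec i \<in> vec.span ((\<lambda>t. coord_proj ({0..<k} - S) (v t)) ` ((\<lambda>p. p - k) ` (S - {0..<k})))}"
proof -
  let ?C = "{0..<k} - S" and ?T = "(\<lambda>p. p - k) ` (S - {0..<k})"
  let ?w = "\<lambda>t. coord_proj ?C (v t)"
  have finT: "finite ?T" using S by simp
  have received: "i \<in> recovered k v S" if "i \<in> S" "i < k" for i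
  proof -
    let ?c = "\<lambda>p. if p = i then 1 else 0"
    have "unit_vec k i j = (\<Sum>p\<in>S. ?c p * coding_vec k v p j)" if j: "j < k" for j
    proof -
      have "(\<Sum>t\<in>?T. ?c (t + k) * v t j) = 0" using \<open>i < k\<close> by (intro sum.neutral) auto
      then show ?thesis using coding_vec_combination[OF S j, of ?c v] j \<open>i \<in> S\<close> by (simp add: unit_vec_def)
    qed
    then show ?thesis using \<open>i < k\<close> by (auto simp: recovered_def in_row_space_def)
  qed
  have in_span: "std_vec i \<in> vec.span (?w ` ?T)" if "i \<in> recovered k v S" "i \<notin> S" for i
  proof -
    obtain c where i: "i < k" and c: "\<forall>j<k. unit_vec k i j = (\<Sum>p\<in>S. c p * coding_vec k v p j)"
      using \<open>i \<in> recovered k v S\<close> by (auto simp: recovered_def in_row_space_def)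
    have "std_vec i j = (\<Sum>t\<in>?T. (\<lambda>j. c (t + k) * ?w t j)) j" for j
    proof (cases "j \<in> ?C")
      case True
      then have j: "j < k" "j \<notin> S" by auto
      have "std_vec i j = unit_vec k i j" using j by (simp add: unit_vec_def std_vec_def)
      also have "\<dots> = (\<Sum>p\<in>S. c p * coding_vec k v p j)" using c j by blast
      also have "\<dots> = (\<Sum>t\<in>?T. c (t + k) * v t j)" using coding_vec_combination[OF S j(1), of c v] j(2) by simp
      also have "\<dots> = (\<Sum>t\<in>?T. (\<lambda>j. c (t + k) * ?w t j)) j" using True by (simp add: sum_fun_apply coord_proj_def)
      finally show ?thesis .
    next
      case False
      then show ?thesis using \<open>i \<notin> S\<close> i by (auto simp: sum_fun_apply coord_proj_def std_vec_def)
    qed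
    then have "std_vec i = (\<Sum>t\<in>?T. (\<lambda>j. c (t + k) * ?w t j))" by (rule ext)
    then show ?thesis using sum_scaled_in_span[where d="\<lambda>t. c (t + k)" and f="?w" and T="?T"] by simp
  qed
  have recovered: "i \<in> recovered k v S" if i: "i \<in> ?C" "std_vec i \<in> vec.span (?w ` ?T)" for i
  proof -
    obtain d where d: "std_vec i = (\<Sum>t\<in>?T. (\<lambda>j. d t * ?w t j))"
      using span_image_coeffs[OF finT i(2)] by blast
    let ?c = "\<lambda>p. if p < k then - (\<Sum>t\<in>?T. d t * v t p) else d (p - k)"
    have "unit_vec k i j = (\<Sum>p\<in>S. ?c p * coding_vec k v p j)" if j: "j < k" for j
    proof -
      have combo: "(\<Sum>p\<in>S. ?c p * coding_vec k v p j) = (if j \<in> S then ?c j else 0) + (\<Sum>t\<in>?T. d t * v t j)"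
        using coding_vec_combination[OF S j, of ?c v] by simp
      show ?thesis
      proof (cases "j \<in> S")
        case True
        then show ?thesis using combo j i(1) by (auto simp: unit_vec_def)
      next
        case False
        have "std_vec i j = (\<Sum>t\<in>?T. d t * v t j)"
          using fun_cong[OF d, of j] j False by (simp add: sum_fun_apply coord_proj_def)
        then show ?thesis using combo j False by (simp add: unit_vec_def std_vec_def)
      qed
    qed
    then show ?thesis using i(1) by (auto simp: recovered_def in_row_space_def)
  qed
  show ?thesis
  proof (rule set_eqI, rule iffI)
    fix i assume i: "i \<in> recovered k v S"
    then have "i < k" by (simp add: recovered_def)
    then show "i \<in> (S \<inter> {0..<k}) \<union> {i\<in>?C. std_vec i \<in> vec.span (?w ` ?T)}"
      using in_span[OF i] by (cases "i \<in> S") auto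
  next
    fix i assume "i \<in> (S \<inter> {0..<k}) \<union> {i\<in>?C. std_vec i \<in> vec.span (?w ` ?T)}"
    then show "i \<in> recovered k v S"
    proof (elim UnE)
      assume "i \<in> S \<inter> {0..<k}"
      then show ?thesis by (intro received) auto
    next
      assume "i \<in> {i\<in>?C. std_vec i \<in> vec.span (?w ` ?T)}"
      then show ?thesis by (intro recovered) auto
    qed
  qed
qed
section \<open>Counting successful outcomes\<close>

lemma prod_if_const:
  assumes "finite A"
  shows "(\<Prod>i\<in>A. if i \<in> B then (a::'b::comm_monoid_mult) else b) = a^card (A \<inter> B) * b^card (A - B)"
proof -
  have "(\<Prod>i\<in>A. if i \<in> B then a else b) = (\<Prod>i\<in>A \<inter> {x. x \<in> B}. a) * (\<Prod>i\<in>A \<inter> - {x. x \<in> B}. b)"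
    by (rule prod.If_cases[OF assms])
  also have "A \<inter> {x. x \<in> B} = A \<inter> B" by auto
  also have "A \<inter> - {x. x \<in> B} = A - B" by auto
  finally show ?thesis by simp
qed

lemma card_coord_proj_fibre:
  fixes z :: "nat \<Rightarrow> 'a::{field,finite}"
  assumes CK: "C \<subseteq> K" and K: "finite K" and z: "z \<in> coord_space C"
  shows "card {w \<in> K \<rightarrow>\<^sub>E (UNIV::'a set). coord_proj C w = z} = CARD('a)^(card K - card C)"
proof -
  have "{w \<in> K \<rightarrow>\<^sub>E (UNIV::'a set). coord_proj C w = z} = PiE K (\<lambda>i. if i \<in> C then {z i} else UNIV)"
  proof (rule set_eqI, rule iffI)
    fix w assume "w \<in> {w \<in> K \<rightarrow>\<^sub>E (UNIV::'a set). coord_proj C w = z}"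
    then have w: "w \<in> K \<rightarrow>\<^sub>E UNIV" "coord_proj C w = z" by auto
    have "w i = z i" if "i \<in> C" for i
    proof -
      have "coord_proj C w i = z i" using w(2) by simp
      thus ?thesis using that by (simp add: coord_proj_def)
    qed
    then show "w \<in> PiE K (\<lambda>i. if i \<in> C then {z i} else UNIV)" using w(1) by (auto simp: PiE_def Pi_def)
  next
    fix w assume w: "w \<in> PiE K (\<lambda>i. if i \<in> C then {z i} else UNIV)"
    have "w \<in> K \<rightarrow>\<^sub>E UNIV" using w by (auto simp: PiE_def Pi_def)
    moreover have "coord_proj C w = z"
    proof (rule ext)
      fix i show "coord_proj C w i = z i"
      proof (cases "i \<in> C")
        case True
        then have "i \<in> K" using CK by auto
        then show ?thesis using w True by (auto simp: coord_proj_def PiE_def Pi_def)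
      next
        case False
        then show ?thesis using z by (simp add: coord_proj_def coord_space_def)
      qed
    qed
    ultimately show "w \<in> {w \<in> K \<rightarrow>\<^sub>E (UNIV::'a set). coord_proj C w = z}" by simp
  qed
  hence "card {w \<in> K \<rightarrow>\<^sub>E (UNIV::'a set). coord_proj C w = z}
      = (\<Prod>i\<in>K. card (if i \<in> C then {z i} else (UNIV::'a set)))"
    using K by (simp add: card_PiE)
  also have "\<dots> = (\<Prod>i\<in>K. if i \<in> C then 1 else CARD('a))" by (rule prod.cong) auto
  also have "\<dots> = CARD('a)^(card K - card C)"
    using prod_if_const[OF K, of C 1 "CARD('a)"] CK K by (simp add: card_Diff_subset Int_absorb1 finite_subset)
  finally show ?thesis .
qed

lemma card_coded_fibre:
  fixes y :: "nat \<Rightarrow> nat \<Rightarrow> 'a::{field,finite}"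
  assumes N: "finite N" and TN: "T \<subseteq> N" and K: "finite K" and CK: "C \<subseteq> K"
    and y: "y \<in> T \<rightarrow>\<^sub>E coord_space C"
  shows "card {v \<in> N \<rightarrow>\<^sub>E (K \<rightarrow>\<^sub>E (UNIV::'a set)). restrict (\<lambda>t. coord_proj C (v t)) T = y}
    = CARD('a)^((card K - card C) * card T) * CARD('a)^(card K * card (N - T))"
proof -
  let ?q = "CARD('a)" and ?F = "K \<rightarrow>\<^sub>E (UNIV::'a set)"
  have "{v \<in> N \<rightarrow>\<^sub>E ?F. restrict (\<lambda>t. coord_proj C (v t)) T = y}
      = PiE N (\<lambda>t. if t \<in> T then {w \<in> ?F. coord_proj C w = y t} else ?F)"
  proof (rule set_eqI, rule iffI)
    fix v assume "v \<in> {v \<in> N \<rightarrow>\<^sub>E ?F. restrict (\<lambda>t. coord_proj C (v t)) T = y}"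
    then have v: "v \<in> N \<rightarrow>\<^sub>E ?F" "restrict (\<lambda>t. coord_proj C (v t)) T = y" by auto
    have "coord_proj C (v t) = y t" if "t \<in> T" for t
      using fun_cong[OF v(2), of t] that by simp
    then show "v \<in> PiE N (\<lambda>t. if t \<in> T then {w \<in> ?F. coord_proj C w = y t} else ?F)"
      using v(1) by (auto simp: PiE_def Pi_def)
  next
    fix v assume v: "v \<in> PiE N (\<lambda>t. if t \<in> T then {w \<in> ?F. coord_proj C w = y t} else ?F)"
    have "v \<in> N \<rightarrow>\<^sub>E ?F" using v by (auto simp: PiE_def Pi_def split: if_splits)
    moreover have "restrict (\<lambda>t. coord_proj C (v t)) T = y"
    proof (rule ext)
      fix t show "restrict (\<lambda>t. coord_proj C (v t)) T t = y t"
      proof (cases "t \<in> T")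
        case True
        then show ?thesis using v TN by (auto simp: PiE_def Pi_def)
      next
        case False
        then show ?thesis using y by (auto simp: PiE_def extensional_def)
      qed
    qed
    ultimately show "v \<in> {v \<in> N \<rightarrow>\<^sub>E ?F. restrict (\<lambda>t. coord_proj C (v t)) T = y}" by simp
  qed
  hence "card {v \<in> N \<rightarrow>\<^sub>E ?F. restrict (\<lambda>t. coord_proj C (v t)) T = y}
      = (\<Prod>t\<in>N. card (if t \<in> T then {w \<in> ?F. coord_proj C w = y t} else ?F))"
    using N by (simp add: card_PiE)
  also have "\<dots> = (\<Prod>t\<in>N. if t \<in> T then ?q^(card K - card C) else ?q^card K)"
  proof (rule prod.cong[OF refl])
    fix t assume "t \<in> N"
    show "card (if t \<in> T then {w \<in> ?F. coord_proj C w = y t} else ?F)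
      = (if t \<in> T then ?q^(card K - card C) else ?q^card K)"
      using y card_coord_proj_fibre[OF CK K, of "y t"] K by (auto simp: card_funcsetE)
  qed
  also have "\<dots> = (?q^(card K - card C))^card T * (?q^card K)^card (N - T)"
    using prod_if_const[OF N, of T "?q^(card K - card C)" "?q^card K"] TN by (simp add: Int_absorb1)
  finally show ?thesis by (simp add: power_mult)
qed

lemma card_recovered:
  fixes v :: "nat \<Rightarrow> nat \<Rightarrow> 'a::field"
  assumes "finite S"
  shows "card (recovered k v S) = card (S \<inter> {0..<k}) + card {i\<in>{0..<k} - S.
     std_vec i \<in> vec.span ((\<lambda>t. coord_proj ({0..<k} - S) (v t)) ` ((\<lambda>p. p - k) ` (S - {0..<k})))}"
  unfolding recovered_eq[OF assms] by (rule card_Un_disjoint) (use assms in auto)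

text \<open>success_count q k nT n x h counts the coded vectors for which at least x source packets are
  recovered from a received set of n packets, h of them source packets.\<close>

definition success_count :: "real \<Rightarrow> nat \<Rightarrow> nat \<Rightarrow> nat \<Rightarrow> nat \<Rightarrow> nat \<Rightarrow> real" where
  "success_count q k nT n x h =
     q^(h * (n - h)) * q^(k * (nT - k - (n - h))) * recovering_tuples_count q (k - h) (n - h) (x - h)"

text \<open>Only the coded vectors received matter, and of those only the coordinates of the source
  packets not received; the remaining coordinates are free.\<close>

lemma card_coded_vectors_recovering:
  fixes k nT n x :: nat and S :: "nat set"
  assumes S: "S \<subseteq> {0..<nT}" "card S = n"
  shows "real (card {v \<in> {0..<nT-k} \<rightarrow>\<^sub>E ({0..<k} \<rightarrow>\<^sub>E (UNIV::'a::{field,finite} set)).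
      x \<le> card (recovered k v S)})
    = success_count (real CARD('a)) k nT n x (card (S \<inter> {0..<k}))"
proof -
  let ?q = "CARD('a)"
  define h where "h = card (S \<inter> {0..<k})"
  define K where "K = {0..<k}"
  define C where "C = K - S"
  define T where "T = (\<lambda>p. p - k) ` (S - K)"
  define N where "N = {0..<nT-k}"
  let ?PV = "N \<rightarrow>\<^sub>E (K \<rightarrow>\<^sub>E (UNIV::'a set))"
  let ?Y = "T \<rightarrow>\<^sub>E (coord_space C :: (nat \<Rightarrow> 'a) set)"
  define \<Phi> where "\<Phi> = (\<lambda>v::nat \<Rightarrow> nat \<Rightarrow> 'a. restrict (\<lambda>t. coord_proj C (v t)) T)"
  define Q where "Q = (\<lambda>y::nat \<Rightarrow> nat \<Rightarrow> 'a. x - h \<le> card {j\<in>C. std_vec j \<in> vec.span (y ` T)})"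
  have finS: "finite S" using S(1) finite_subset by blast
  have hK: "card (S \<inter> K) = h" by (simp add: h_def K_def)
  have cSK: "card (S - K) = n - h"
    using card_Diff_subset_Int[of S K] S(2) hK finS by simp
  have "inj_on (\<lambda>p. p - k) (S - K)" by (auto simp: inj_on_def K_def)
  then have cT: "card T = n - h" unfolding T_def using cSK by (simp add: card_image)
  have cC: "card C = k - h"
  proof -
    have "C = K - (S \<inter> K)" by (auto simp: C_def)
    thus ?thesis using card_Diff_subset[of "S \<inter> K" K] hK by (simp add: K_def)
  qed
  have finT: "finite T" unfolding T_def using finS by simp
  have TN: "T \<subseteq> N" using S(1) by (auto simp: T_def N_def K_def)
  have finC: "finite C" by (simp add: C_def K_def)
  have rec: "x \<le> card (recovered k v S) \<longleftrightarrow> Q (\<Phi> v)" for v :: "nat \<Rightarrow> nat \<Rightarrow> 'a"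
  proof -
    have "\<Phi> v ` T = (\<lambda>t. coord_proj C (v t)) ` T" by (auto simp: \<Phi>_def)
    then have "card (recovered k v S) = h + card {j\<in>C. std_vec j \<in> vec.span (\<Phi> v ` T)}"
      using card_recovered[OF finS, of k v] by (simp add: C_def T_def K_def h_def)
    then show ?thesis unfolding Q_def by arith
  qed
  have finPV: "finite ?PV" by (simp add: N_def K_def finite_PiE)
  have finY: "finite ?Y" using finT finite_coord_space[OF finC, where 'a='a] by (simp add: finite_PiE)
  have PhiY: "\<Phi> ` ?PV \<subseteq> ?Y" by (auto simp: \<Phi>_def coord_proj_def coord_space_def)
  have fib: "card {v \<in> ?PV. \<Phi> v = y} = ?q^(h * (n - h)) * ?q^(k * (nT - k - (n - h)))" if "y \<in> ?Y" for y
  proof -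
    have "card K - card C = h" "card (N - T) = nT - k - (n - h)"
      using cC hK card_mono[of K "S \<inter> K"] card_Diff_subset[OF finT TN] cT
      by (auto simp: K_def N_def)
    then show ?thesis
      using card_coded_fibre[OF _ TN _ _ that] cT by (simp add: \<Phi>_def N_def K_def C_def)
  qed
  have "card {v \<in> ?PV. Q (\<Phi> v)} = (\<Sum>y\<in>{y\<in>?Y. Q y}. card {v \<in> ?PV. \<Phi> v = y})"
    by (rule card_filter_eq_sum_fibres[OF finPV PhiY finY])
  also have "\<dots> = card {y\<in>?Y. Q y} * (?q^(h * (n - h)) * ?q^(k * (nT - k - (n - h))))"
    using fib by simp
  finally have "real (card {v \<in> ?PV. x \<le> card (recovered k v S)})
      = real (card {y\<in>?Y. Q y}) * (real ?q^(h * (n - h)) * real ?q^(k * (nT - k - (n - h))))"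
    using rec by simp
  also have "real (card {y\<in>?Y. Q y}) = recovering_tuples_count (real ?q) (k - h) (n - h) (x - h)"
    using card_tuples_recovering[OF finC finT, of "x - h", where 'a='a] cC cT unfolding Q_def by simp
  finally show ?thesis unfolding success_count_def h_def N_def K_def by (simp add: mult_ac)
qed
lemma card_subsets_meeting:
  assumes U: "finite U" and KU: "K \<subseteq> U" and hn: "h \<le> n"
  shows "card {S. S \<subseteq> U \<and> card S = n \<and> card (S \<inter> K) = h} = (card K choose h) * (card U - card K choose (n - h))"
proof -
  have finK: "finite K" using finite_subset[OF KU U] .
  let ?A = "{A. A \<subseteq> K \<and> card A = h}" and ?B = "{B. B \<subseteq> U - K \<and> card B = n - h}"
  have "bij_betw (\<lambda>S. (S \<inter> K, S - K)) {S. S \<subseteq> U \<and> card S = n \<and> card (S \<inter> K) = h} (?A \<times> ?B)"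
  proof (rule bij_betw_byWitness[where f'="\<lambda>(A,B). A \<union> B"])
    show "\<forall>S\<in>{S. S \<subseteq> U \<and> card S = n \<and> card (S \<inter> K) = h}. (case (S \<inter> K, S - K) of (A, B) \<Rightarrow> A \<union> B) = S"
      by auto
    show "\<forall>p\<in>?A \<times> ?B. (\<lambda>S. (S \<inter> K, S - K)) (case p of (A, B) \<Rightarrow> A \<union> B) = p" by auto
    show "(\<lambda>S. (S \<inter> K, S - K)) ` {S. S \<subseteq> U \<and> card S = n \<and> card (S \<inter> K) = h} \<subseteq> ?A \<times> ?B"
    proof (rule image_subsetI)
      fix S assume S: "S \<in> {S. S \<subseteq> U \<and> card S = n \<and> card (S \<inter> K) = h}"
      have fS: "finite S" using S U by (auto intro: finite_subset)
      have "card (S - K) = n - h" using S card_Diff_subset_Int[of S K] fS by simp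
      then show "(S \<inter> K, S - K) \<in> ?A \<times> ?B" using S by auto
    qed
    show "(\<lambda>(A,B). A \<union> B) ` (?A \<times> ?B) \<subseteq> {S. S \<subseteq> U \<and> card S = n \<and> card (S \<inter> K) = h}"
    proof (rule image_subsetI)
      fix p assume "p \<in> ?A \<times> ?B"
      then obtain A B where p: "p = (A, B)" and A: "A \<subseteq> K" "card A = h" and B: "B \<subseteq> U - K" "card B = n - h"
        by auto
      have fA: "finite A" using A finK by (auto intro: finite_subset)
      have fB: "finite B" using B U by (auto intro: finite_subset)
      have "card (A \<union> B) = n" using card_Un_disjoint[OF fA fB] A B hn by auto
      moreover have "(A \<union> B) \<inter> K = A" using A B by auto
      ultimately show "(\<lambda>(A,B). A \<union> B) p \<in> {S. S \<subseteq> U \<and> card S = n \<and> card (S \<inter> K) = h}"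
        using A B KU p by auto
    qed
  qed
  hence "card {S. S \<subseteq> U \<and> card S = n \<and> card (S \<inter> K) = h} = card (?A \<times> ?B)" by (rule bij_betw_same_card)
  also have "\<dots> = (card K choose h) * (card (U - K) choose (n - h))"
    using finK U by (simp add: card_cartesian_product n_subsets)
  finally show ?thesis using card_Diff_subset[OF finK KU] by simp
qed


lemma sum_received_sets:
  fixes f :: "nat \<Rightarrow> real"
  assumes knT: "k \<le> nT"
  shows "(\<Sum>S\<in>{S. S \<subseteq> {0..<nT} \<and> card S = n}. f (card (S \<inter> {0..<k})))
    = (\<Sum>h\<le>min n k. real (k choose h) * real ((nT - k) choose (n - h)) * f h)"
proof -
  let ?SS = "{S. S \<subseteq> {0..<nT} \<and> card S = n}"
  let ?G = "\<lambda>h. {S \<in> ?SS. card (S \<inter> {0..<k}) = h}"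
  have finSS: "finite ?SS" by (rule finite_subset[of _ "Pow {0..<nT}"]) auto
  have "(\<Sum>S\<in>?SS. f (card (S \<inter> {0..<k}))) = (\<Sum>h\<in>{..k}. \<Sum>S\<in>?G h. f (card (S \<inter> {0..<k})))"
    by (rule sum.group[symmetric, OF finSS]) (auto intro: card_mono[of "{0..<k}", simplified])
  also have "\<dots> = (\<Sum>h\<in>{..k}. real (card (?G h)) * f h)" by simp
  also have "\<dots> = (\<Sum>h\<in>{..k}. if h \<le> n then real (k choose h) * real ((nT - k) choose (n - h)) * f h else 0)"
  proof (rule sum.cong[OF refl])
    fix h
    show "real (card (?G h)) * f h
      = (if h \<le> n then real (k choose h) * real ((nT - k) choose (n - h)) * f h else 0)"
    proof (cases "h \<le> n")
      case True
      have "?G h = {S. S \<subseteq> {0..<nT} \<and> card S = n \<and> card (S \<inter> {0..<k}) = h}" by auto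
      then show ?thesis using card_subsets_meeting[of "{0..<nT}" "{0..<k}" h n] True knT by simp
    next
      case False
      have "card (S \<inter> {0..<k}) \<le> card S" if "S \<subseteq> {0..<nT}" for S
        using that by (intro card_mono) (auto intro: finite_subset)
      then have "?G h = {}" using False by fastforce
      then show ?thesis using False by simp
    qed
  qed
  also have "\<dots> = (\<Sum>h\<in>{h\<in>{..k}. h \<le> n}. real (k choose h) * real ((nT - k) choose (n - h)) * f h)"
    by (rule sum.inter_filter[symmetric]) simp
  also have "{h\<in>{..k}. h \<le> n} = {..min n k}" by auto
  finally show ?thesis .
qed

lemma prob_recovery_eq_sum:
  fixes k nT n x :: nat
  assumes knT: "k \<le> nT" and nnT: "n \<le> nT"
  shows "measure_pmf.prob
      (pmf_of_set (({0..<nT - k} \<rightarrow>\<^sub>E ({0..<k} \<rightarrow>\<^sub>E (UNIV :: ('a::{field,finite}) set)))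
        \<times> {S. S \<subseteq> {0..<nT} \<and> card S = n}))
      {(v, S). x \<le> card (recovered k v S)}
    = (\<Sum>h\<le>min n k. real (k choose h) * real ((nT - k) choose (n - h)) * success_count (real CARD('a)) k nT n x h)
      / (real CARD('a)^(k * (nT - k)) * real (nT choose n))"
proof -
  let ?PV = "{0..<nT - k} \<rightarrow>\<^sub>E ({0..<k} \<rightarrow>\<^sub>E (UNIV :: 'a set))"
  let ?SS = "{S. S \<subseteq> {0..<nT} \<and> card S = n}"
  let ?good = "{(v, S). x \<le> card (recovered k v S)}"
  have finPV: "finite ?PV" by (simp add: finite_PiE)
  have finSS: "finite ?SS" by (rule finite_subset[of _ "Pow {0..<nT}"]) auto
  have "?SS \<noteq> {}" using nnT by (auto intro!: exI[of _ "{0..<n}"])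
  moreover have "?PV \<noteq> {}" by (simp add: PiE_eq_empty_iff)
  ultimately have "measure_pmf.prob (pmf_of_set (?PV \<times> ?SS)) ?good
      = real (card ((?PV \<times> ?SS) \<inter> ?good)) / real (card (?PV \<times> ?SS))"
    by (intro measure_pmf_of_set) (use finPV finSS in auto)
  also have "(?PV \<times> ?SS) \<inter> ?good = {p \<in> ?PV \<times> ?SS. x \<le> card (recovered k (fst p) (snd p))}"
    by auto
  also have "card \<dots> = (\<Sum>S\<in>?SS. card {v \<in> ?PV. x \<le> card (recovered k v S)})"
    by (rule card_pairs_eq_sum[OF finSS finPV])
  also have "real \<dots> = (\<Sum>S\<in>?SS. success_count (real CARD('a)) k nT n x (card (S \<inter> {0..<k})))"
    unfolding of_nat_sum
  proof (rule sum.cong[OF refl])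
    fix S assume "S \<in> ?SS"
    then show "real (card {v \<in> ?PV. x \<le> card (recovered k v S)})
      = success_count (real CARD('a)) k nT n x (card (S \<inter> {0..<k}))"
      using card_coded_vectors_recovering[where 'a='a] by auto
  qed
  also have "\<dots> = (\<Sum>h\<le>min n k. real (k choose h) * real ((nT - k) choose (n - h))
      * success_count (real CARD('a)) k nT n x h)"
    by (rule sum_received_sets[OF knT])
  also have "card (?PV \<times> ?SS) = CARD('a)^(k * (nT - k)) * (nT choose n)"
    using n_subsets[of "{0..<nT}" n] by (simp add: card_cartesian_product card_funcsetE power_mult)
  finally show ?thesis by simp
qed
section \<open>The closed formula\<close>

definition formula_term :: "real \<Rightarrow> nat \<Rightarrow> nat \<Rightarrow> nat \<Rightarrow> nat \<Rightarrow> int \<Rightarrow> int \<Rightarrow> real" where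
 "formula_term q k nT n x r h = binom_int (int k) h * binom_int (int nT - int k) (int n - h)
          * q powi (- ((int n - h) * (int k - h)))
          * (\<Prod>l\<in>{0..<r - h}. q powi (int n - h) - q powi l)
          * (\<Sum>i\<in>{max 0 (int x - h)..r - h}.
               binom_int (int k - h) i *
               (\<Sum>j\<in>{0..int k - h - i}.
                  (-1) powi j * binom_int (int k - h - i) j
                  * qbinom q (int k - h - i - j) (r - h - i - j)))"

lemma binom_int_nat: "binom_int (int a) (int b) = real (a choose b)"
  by (simp add: binom_int_def binomial_eq_0)

lemma exact_std_vecs_count_eq_0: "e < i \<Longrightarrow> exact_std_vecs_count q m i e = 0"
  unfolding exact_std_vecs_count_def by (rule sum.neutral) (auto simp: qbinom_def)

lemma sum_alternating_qbinom:
  assumes "i \<le> m"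
  shows "(\<Sum>j\<in>{0..int m - int i}. (-1) powi j * binom_int (int m - int i) j * qbinom q (int m - int i - j) (int e - int i - j))
       = exact_std_vecs_count q m i e"
proof -
  have mi: "int m - int i = int (m - i)" using assms by simp
  have "(\<Sum>j\<in>{0..int m - int i}. (-1) powi j * binom_int (int m - int i) j * qbinom q (int m - int i - j) (int e - int i - j))
      = (\<Sum>j\<in>{int 0..int (m - i)}. (-1) powi j * binom_int (int (m - i)) j * qbinom q (int (m - i) - j) (int e - int i - j))"
    unfolding mi by simp
  also have "\<dots> = (\<Sum>j\<in>{0..m - i}. (-1) powi (int j) * binom_int (int (m - i)) (int j) * qbinom q (int (m - i) - int j) (int e - int i - int j))"
    by (simp only: sum.atLeast_int_atMost_int_shift o_def)
  also have "\<dots> = (\<Sum>j\<in>{0..m - i}. (-1)^j * real ((m - i) choose j) * qbinom q (int (m - i - j)) (int e - int i - int j))"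
  proof (intro sum.cong refl)
    fix j assume "j \<in> {0..m - i}"
    then have jj: "int (m - i) - int j = int (m - i - j)" by simp
    show "(-1) powi (int j) * binom_int (int (m - i)) (int j) * qbinom q (int (m - i) - int j) (int e - int i - int j)
        = (-1)^j * real ((m - i) choose j) * qbinom q (int (m - i - j)) (int e - int i - int j)"
      unfolding jj by (simp add: binom_int_nat power_int_of_nat)
  qed
  also have "\<dots> = exact_std_vecs_count q m i e" unfolding exact_std_vecs_count_def by (simp add: atLeast0AtMost)
  finally show ?thesis .
qed

lemma prod_powi_eq_qfalling:
  "(\<Prod>l\<in>{0..<int e}. q powi int m - q powi l) = qfalling q m e"
proof -
  have "(\<Prod>l\<in>{int 0..<int e}. q powi int m - q powi l) = (\<Prod>l\<in>{0..<e}. q powi int m - q powi int l)"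
    by (simp only: prod.atLeast_int_lessThan_int_shift o_def)
  then show ?thesis by (simp add: qfalling_def power_int_of_nat atLeast0LessThan)
qed

lemma formula_inner_sum_nat:
  assumes hr: "h \<le> r" and rk: "r \<le> k"
  shows "(\<Sum>i\<in>{max 0 (int x - int h)..int r - int h}. binom_int (int k - int h) i *
       (\<Sum>j\<in>{0..int k - int h - i}. (-1) powi j * binom_int (int k - int h - i) j
          * qbinom q (int k - int h - i - j) (int r - int h - i - j)))
    = (\<Sum>i\<in>{x - h..r - h}. real ((k - h) choose i) * exact_std_vecs_count q (k - h) i (r - h))"
proof -
  have "max 0 (int x - int h) = int (x - h)" "int r - int h = int (r - h)" "int k - int h = int (k - h)"
    using hr rk by auto
  then have "(\<Sum>i\<in>{max 0 (int x - int h)..int r - int h}. binom_int (int k - int h) i *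
       (\<Sum>j\<in>{0..int k - int h - i}. (-1) powi j * binom_int (int k - int h - i) j
          * qbinom q (int k - int h - i - j) (int r - int h - i - j)))
    = (\<Sum>i\<in>{x - h..r - h}. binom_int (int (k - h)) (int i) *
       (\<Sum>j\<in>{0..int (k - h) - int i}. (-1) powi j * binom_int (int (k - h) - int i) j
          * qbinom q (int (k - h) - int i - j) (int (r - h) - int i - j)))"
    by (simp only: sum.atLeast_int_atMost_int_shift o_def)
  also have "\<dots> = (\<Sum>i\<in>{x - h..r - h}. real ((k - h) choose i) * exact_std_vecs_count q (k - h) i (r - h))"
  proof (intro sum.cong refl)
    fix i assume "i \<in> {x - h..r - h}"
    then have "i \<le> k - h" using rk by auto
    then show "binom_int (int (k - h)) (int i) *
       (\<Sum>j\<in>{0..int (k - h) - int i}. (-1) powi j * binom_int (int (k - h) - int i) j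
          * qbinom q (int (k - h) - int i - j) (int (r - h) - int i - j))
      = real ((k - h) choose i) * exact_std_vecs_count q (k - h) i (r - h)"
      using sum_alternating_qbinom[of i "k - h" q "r - h"] by (simp add: binom_int_nat)
  qed
  finally show ?thesis .
qed

lemma formula_term_nat:
  assumes hr: "h \<le> r" and rn: "r \<le> n" and rk: "r \<le> k" and knT: "k \<le> nT"
  shows "formula_term q k nT n x (int r) (int h) = real (k choose h) * real ((nT - k) choose (n - h))
      * q powi (- ((int n - int h) * (int k - int h))) * qfalling q (n - h) (r - h)
      * (\<Sum>i\<in>{x - h..r - h}. real ((k - h) choose i) * exact_std_vecs_count q (k - h) i (r - h))"
proof -
  have "binom_int (int nT - int k) (int n - int h) = real ((nT - k) choose (n - h))"
    using knT hr rn binom_int_nat[of "nT - k" "n - h"] by (simp add: of_nat_diff)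
  moreover have "(\<Prod>l\<in>{0..<int r - int h}. q powi (int n - int h) - q powi l) = qfalling q (n - h) (r - h)"
    using prod_powi_eq_qfalling[where e="r - h" and q=q and m="n - h"] hr rn by (simp add: of_nat_diff)
  ultimately show ?thesis
    unfolding formula_term_def formula_inner_sum_nat[OF hr rk] by (simp add: binom_int_nat)
qed

lemma recovering_tuples_count_eq_sum_over_r:
  assumes hM: "h \<le> min n k"
  shows "(\<Sum>r\<in>{r\<in>{x..min n k}. h \<le> r}. qfalling q (n - h) (r - h) * (\<Sum>i\<in>{x - h..r - h}. real ((k - h) choose i) * exact_std_vecs_count q (k - h) i (r - h)))
       = recovering_tuples_count q (k - h) (n - h) (x - h)"
proof -
  let ?M = "min n k"
  let ?S1 = "\<lambda>e. (\<Sum>i\<in>{x - h..e}. real ((k - h) choose i) * exact_std_vecs_count q (k - h) i e)"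
  let ?S2 = "\<lambda>e. (\<Sum>i\<in>{x - h..k - h}. real ((k - h) choose i) * exact_std_vecs_count q (k - h) i e)"
  have bij: "bij_betw (\<lambda>e. e + h) {x - h..?M - h} {r\<in>{x..?M}. h \<le> r}"
    by (rule bij_betw_byWitness[where f'="\<lambda>r. r - h"]) (use hM in auto)
  have "(\<Sum>r\<in>{r\<in>{x..?M}. h \<le> r}. qfalling q (n - h) (r - h) * ?S1 (r - h))
      = (\<Sum>e\<in>{x - h..?M - h}. qfalling q (n - h) (e + h - h) * ?S1 (e + h - h))"
    by (rule sum.reindex_bij_betw[OF bij, symmetric])
  also have "\<dots> = (\<Sum>e\<in>{x - h..?M - h}. qfalling q (n - h) e * ?S1 e)" by simp
  also have "\<dots> = (\<Sum>e\<in>{..k - h}. qfalling q (n - h) e * ?S1 e)"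
  proof (rule sum.mono_neutral_left)
    show "{x - h..?M - h} \<subseteq> {..k - h}" by auto
    show "\<forall>e\<in>{..k - h} - {x - h..?M - h}. qfalling q (n - h) e * ?S1 e = 0"
    proof
      fix e assume e: "e \<in> {..k - h} - {x - h..?M - h}"
      show "qfalling q (n - h) e * ?S1 e = 0"
      proof (cases "e < x - h")
        case True
        then show ?thesis by simp
      next
        case False
        then have "e > ?M - h" using e by auto
        then have "n - h < e" using e hM by auto
        then show ?thesis by (simp add: qfalling_eq_0)
      qed
    qed
  qed simp
  also have "\<dots> = (\<Sum>e\<in>{..k - h}. qfalling q (n - h) e * ?S2 e)"
  proof (intro sum.cong refl)
    fix e assume e: "e \<in> {..k - h}"
    have "?S2 e = ?S1 e"
    proof (rule sum.mono_neutral_right)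
      show "{x - h..e} \<subseteq> {x - h..k - h}" using e by auto
      show "\<forall>i\<in>{x - h..k - h} - {x - h..e}. real ((k - h) choose i) * exact_std_vecs_count q (k - h) i e = 0"
        by (auto simp: exact_std_vecs_count_eq_0)
    qed simp
    then show "qfalling q (n - h) e * ?S1 e = qfalling q (n - h) e * ?S2 e" by simp
  qed
  also have "\<dots> = recovering_tuples_count q (k - h) (n - h) (x - h)" by (simp add: recovering_tuples_count_def)
  finally show ?thesis .
qed

lemma binomial_power_ratio:
  fixes q :: real
  assumes q: "q > 0" and hn: "h \<le> n" and hk: "h \<le> k"
  shows "real ((nT - k) choose (n - h)) * (q^(h * (n - h)) * q^(k * (nT - k - (n - h)))) / q^(k * (nT - k))
      = real ((nT - k) choose (n - h)) * q powi (- ((int n - int h) * (int k - int h)))"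
proof (cases "n - h \<le> nT - k")
  case True
  define a where "a = n - h"
  define b where "b = k - h"
  define N where "N = nT - k"
  have kN: "k * N = a * b + h * a + k * (N - a)"
  proof -
    have Na: "N = a + (N - a)" using True by (simp add: a_def N_def)
    have "k * N = k * a + k * (N - a)" using Na by (metis add_mult_distrib2)
    moreover have "k * a = a * b + h * a" using hk by (simp add: b_def algebra_simps flip: add_mult_distrib)
    ultimately show ?thesis by simp
  qed
  have ex: "(int n - int h) * (int k - int h) = int (a * b)" using hn hk by (simp add: a_def b_def of_nat_diff)
  have "q^(h * a) * q^(k * (N - a)) / q^(k * N) = 1 / q^(a * b)"
    unfolding kN using q by (simp add: power_add field_simps)
  also have "\<dots> = q powi (- ((int n - int h) * (int k - int h)))"
    unfolding ex by (simp only: power_int_minus power_int_of_nat) (simp add: divide_inverse)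
  finally have "q^(h * (n - h)) * q^(k * (nT - k - (n - h))) / q^(k * (nT - k)) = q powi (- ((int n - int h) * (int k - int h)))"
    by (simp add: a_def N_def)
  then show ?thesis by (metis times_divide_eq_right)
next
  case False
  have z: "real ((nT - k) choose (n - h)) = 0" using False by (simp add: binomial_eq_0)
  show ?thesis by (simp only: z)
qed

lemma formula_sum_nat:
  "(\<Sum>r\<in>{int x..min (int n) (int k)}. \<Sum>h\<in>{max 0 (int n - int nT + int k)..r}. formula_term q k nT n x r h)
    = (\<Sum>r\<in>{x..min n k}. \<Sum>h\<in>{0..r}. formula_term q k nT n x (int r) (int h))"
proof -
  have "min (int n) (int k) = int (min n k)" by simp
  hence "(\<Sum>r\<in>{int x..min (int n) (int k)}. \<Sum>h\<in>{max 0 (int n - int nT + int k)..r}. formula_term q k nT n x r h)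
      = (\<Sum>r\<in>{x..min n k}. \<Sum>h\<in>{max 0 (int n - int nT + int k)..int r}. formula_term q k nT n x (int r) h)"
    by (simp only: sum.atLeast_int_atMost_int_shift o_def)
  also have "\<dots> = (\<Sum>r\<in>{x..min n k}. \<Sum>h\<in>{0..int r}. formula_term q k nT n x (int r) h)"
  proof (rule sum.cong[OF refl])
    fix r
    have "formula_term q k nT n x (int r) h = 0" if "h \<in> {0..int r} - {max 0 (int n - int nT + int k)..int r}" for h
    proof -
      have "binom_int (int nT - int k) (int n - h) = 0" using that by (auto simp: binom_int_def)
      then show ?thesis by (simp add: formula_term_def)
    qed
    then show "(\<Sum>h\<in>{max 0 (int n - int nT + int k)..int r}. formula_term q k nT n x (int r) h)
      = (\<Sum>h\<in>{0..int r}. formula_term q k nT n x (int r) h)"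
      by (intro sum.mono_neutral_left) auto
  qed
  also have "\<dots> = (\<Sum>r\<in>{x..min n k}. \<Sum>h\<in>{0..r}. formula_term q k nT n x (int r) (int h))"
  proof (rule sum.cong[OF refl])
    fix r
    have "{0..int r} = {int 0..int r}" by simp
    then show "(\<Sum>h\<in>{0..int r}. formula_term q k nT n x (int r) h)
      = (\<Sum>h\<in>{0..r}. formula_term q k nT n x (int r) (int h))"
      by (simp only: sum.atLeast_int_atMost_int_shift o_def)
  qed
  finally show ?thesis .
qed

lemma success_sum_eq_formula:
  fixes q :: real
  assumes q: "q > 0" and knT: "k \<le> nT"
  shows "(\<Sum>h\<le>min n k. real (k choose h) * real ((nT - k) choose (n - h)) * success_count q k nT n x h)
      / (q^(k * (nT - k)) * real (nT choose n))
    = 1 / real (nT choose n) * (\<Sum>r\<in>{int x..min (int n) (int k)}.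
        \<Sum>h\<in>{max 0 (int n - int nT + int k)..r}. formula_term q k nT n x r h)"
proof -
  let ?M = "min n k"
  define Z where "Z h = real (k choose h) * real ((nT - k) choose (n - h))
    * q powi (- ((int n - int h) * (int k - int h)))" for h
  define R where "R h r = qfalling q (n - h) (r - h)
    * (\<Sum>i\<in>{x - h..r - h}. real ((k - h) choose i) * exact_std_vecs_count q (k - h) i (r - h))" for h r
  have "real (k choose h) * real ((nT - k) choose (n - h)) * success_count q k nT n x h / q^(k * (nT - k))
      = Z h * recovering_tuples_count q (k - h) (n - h) (x - h)" if "h \<le> ?M" for h
  proof -
    have "real (k choose h) * real ((nT - k) choose (n - h)) * success_count q k nT n x h / q^(k * (nT - k))
      = real (k choose h) * (real ((nT - k) choose (n - h)) * (q^(h * (n - h)) * q^(k * (nT - k - (n - h))))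
        / q^(k * (nT - k))) * recovering_tuples_count q (k - h) (n - h) (x - h)"
      by (simp add: success_count_def)
    also have "\<dots> = real (k choose h) * (real ((nT - k) choose (n - h))
        * q powi (- ((int n - int h) * (int k - int h)))) * recovering_tuples_count q (k - h) (n - h) (x - h)"
      using that by (simp only: binomial_power_ratio[OF q] min.bounded_iff)
    finally show ?thesis by (simp add: Z_def)
  qed
  then have "(\<Sum>h\<le>?M. real (k choose h) * real ((nT - k) choose (n - h)) * success_count q k nT n x h)
      / q^(k * (nT - k)) = (\<Sum>h\<le>?M. Z h * recovering_tuples_count q (k - h) (n - h) (x - h))"
    by (simp add: sum_divide_distrib)
  also have "\<dots> = (\<Sum>h\<le>?M. \<Sum>r\<in>{r\<in>{x..?M}. h \<le> r}. Z h * R h r)"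
  proof (rule sum.cong[OF refl])
    fix h assume "h \<in> {..?M}"
    then have "recovering_tuples_count q (k - h) (n - h) (x - h) = (\<Sum>r\<in>{r\<in>{x..?M}. h \<le> r}. R h r)"
      unfolding R_def by (intro recovering_tuples_count_eq_sum_over_r[symmetric]) simp
    then show "Z h * recovering_tuples_count q (k - h) (n - h) (x - h) = (\<Sum>r\<in>{r\<in>{x..?M}. h \<le> r}. Z h * R h r)"
      by (simp add: sum_distrib_left)
  qed
  also have "\<dots> = (\<Sum>r\<in>{x..?M}. \<Sum>h\<in>{h\<in>{..?M}. h \<le> r}. Z h * R h r)"
    by (rule sum.swap_restrict) auto
  also have "\<dots> = (\<Sum>r\<in>{x..?M}. \<Sum>h\<in>{0..r}. formula_term q k nT n x (int r) (int h))"
  proof (rule sum.cong[OF refl])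
    fix r assume r: "r \<in> {x..?M}"
    then have "{h\<in>{..?M}. h \<le> r} = {0..r}" by auto
    moreover have "Z h * R h r = formula_term q k nT n x (int r) (int h)" if "h \<in> {0..r}" for h
      using formula_term_nat[of h r n k nT q x] that r knT by (simp add: Z_def R_def mult.assoc)
    ultimately show "(\<Sum>h\<in>{h\<in>{..?M}. h \<le> r}. Z h * R h r)
      = (\<Sum>h\<in>{0..r}. formula_term q k nT n x (int r) (int h))" by simp
  qed
  also have "\<dots> = (\<Sum>r\<in>{int x..min (int n) (int k)}.
      \<Sum>h\<in>{max 0 (int n - int nT + int k)..r}. formula_term q k nT n x r h)"
    by (rule formula_sum_nat[symmetric])
  finally show ?thesis by (simp flip: divide_divide_eq_left)
qed

theorem proposition2:
  fixes k nT n x :: nat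
  assumes "1 \<le> k" "k \<le> nT" "1 \<le> n" "n \<le> nT" "x \<le> k"
  shows "measure_pmf.prob
      (pmf_of_set (({0..<nT - k} \<rightarrow>\<^sub>E ({0..<k} \<rightarrow>\<^sub>E (UNIV :: ('a::{field,finite}) set)))
                   \<times> {S. S \<subseteq> {0..<nT} \<and> card S = n}))
      {(v, S). x \<le> card (recovered k v S)}
    = 1 / real (nT choose n) *
      (\<Sum>r\<in>{int x..min (int n) (int k)}.
        \<Sum>h\<in>{max 0 (int n - int nT + int k)..r}.
          binom_int (int k) h * binom_int (int nT - int k) (int n - h)
          * (real CARD('a)) powi (- ((int n - h) * (int k - h)))
          * (\<Prod>l\<in>{0..<r - h}. (real CARD('a)) powi (int n - h) - (real CARD('a)) powi l)
          * (\<Sum>i\<in>{max 0 (int x - h)..r - h}.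
               binom_int (int k - h) i *
               (\<Sum>j\<in>{0..int k - h - i}.
                  (-1) powi j * binom_int (int k - h - i) j
                  * qbinom (real CARD('a)) (int k - h - i - j) (r - h - i - j))))"
proof -
  have q: "real CARD('a) > 0" by simp
  show ?thesis
    unfolding prob_recovery_eq_sum[OF \<open>k \<le> nT\<close> \<open>n \<le> nT\<close>] success_sum_eq_formula[OF q \<open>k \<le> nT\<close>]
    by (simp only: formula_term_def[abs_def])
qed

end
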